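(* Let $\{Y_i:i\geq1\}$ be i.i.d. positive integer-valued random variables and $\{\widetilde Y_j:j\geq1\}$ an independent copy of this sequence; let $Y$ denote a random variable with the law of $Y_1$. Set $S_0=\widetilde S_0=0$, $S_n=Y_1+\dots+Y_n$, $\widetilde S_n=\widetilde Y_1+\dots+\widetilde Y_n$. Let $h$ be the largest positive integer such that the law of $Y$ is supported on $h\mathbb N^*$, where $\mathbb N^*=\{1,2,\dots\}$, and for $i,j\in h\mathbb N$ (with $\mathbb N=\{0,1,2,\dots\}$) let $$L_{i,j}=\inf\{\ell\geq1:\ \exists m,n\geq0 \text{ with } i+S_m=\ell=j+\widetilde S_n\}.$$ Let $1\leq p<\infty$ be real and assume $E(Y^{p+1})<\infty$. Then there exists a finite constant $C$ such that for all $i,j\in h\mathbb N$, $$E(L_{i,j}^p)\leq C(1+i^p+j^p).$$ *)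

theory Defs
  imports "HOL-Probability.Probability" "HOL-Library.Extended_Nat"
begin

definition psum :: "(nat \<Rightarrow> 'a \<Rightarrow> nat) \<Rightarrow> nat \<Rightarrow> 'a \<Rightarrow> nat" where
  "psum Y n \<omega> = (\<Sum>k\<in>{1..n}. Y k \<omega>)"

definition meet_time :: "(nat \<Rightarrow> 'a \<Rightarrow> nat) \<Rightarrow> (nat \<Rightarrow> 'a \<Rightarrow> nat) \<Rightarrow> nat \<Rightarrow> nat \<Rightarrow> 'a \<Rightarrow> enat" where
  "meet_time Y Yt i j \<omega> =
     Inf {enat l | l. l \<ge> 1 \<and> (\<exists>m n. i + psum Y m \<omega> = l \<and> j + psum Yt n \<omega> = l)}"

definition enat_powr :: "enat \<Rightarrow> real \<Rightarrow> ennreal" where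
  "enat_powr x p = (case x of enat l \<Rightarrow> ennreal (real l powr p) | \<infinity> \<Rightarrow> \<infinity>)"

definition span :: "'a measure \<Rightarrow> ('a \<Rightarrow> nat) \<Rightarrow> nat" where
  "span M X = (GREATEST h. h > 0 \<and> (AE \<omega> in M. \<exists>k\<ge>1. X \<omega> = h * k))"

end

theory Submission
  imports Defs
begin

text \<open>Let the lower of the two walks (the first one on ties) take the next step. The pair of
  positions is then a Markov chain, absorbed when both positions agree at a level \<open>\<ge> 1\<close>, and
  \<open>L\<^sub>i\<^sub>,\<^sub>j\<close> is at most the absorption level. So it suffices to bound \<open>P\<^sup>n V (i, j)\<close>
  uniformly in \<open>n\<close>, for the transition operator \<open>P\<close> of the chain and
  \<open>V = max(a, b, 1)\<^sup>p\<close>, which satisfies \<open>V \<le> P V\<close>. We dominate \<open>V\<close> by the Lyapunov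
  function \<open>W = 2 pot\<^sup>p\<close> with \<open>pot = max(a, b) + |a - b| + B\<close> (and \<open>W = a\<^sup>p\<close> once
  absorbed). When the gap \<open>|a - b|\<close> is large, \<open>P W \<le> W\<close>: steps shorter than the gap decrease
  \<open>pot\<close> linearly, and by the moment of order \<open>p + 1\<close> overshooting steps cost only
  \<open>O(pot\<^sup>p\<^sup>-\<^sup>1 / gap)\<close>. When the gap is small and a multiple of the span \<open>h\<close>, some bounded
  sequence of steps of probability bounded below makes the walks meet above the current maximum;
  for \<open>B\<close> large this makes a bounded iterate of \<open>P\<close> decrease \<open>W\<close>. Hence
  \<open>P\<^sup>n V \<le> W \<le> C (1 + i\<^sup>p + j\<^sup>p)\<close>.\<close>

section \<open>Inequalities for real powers\<close>

lemma powr_increment_bounds: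
  fixes u t p :: real
  assumes u: "0 < u" and t: "0 \<le> t" and p: "1 \<le> p"
  shows "p * t * u powr (p - 1) \<le> (u + t) powr p - u powr p"
    and "(u + t) powr p - u powr p \<le> p * t * (u + t) powr (p - 1)"
proof -
  have "p * t * u powr (p - 1) \<le> (u + t) powr p - u powr p \<and>
        (u + t) powr p - u powr p \<le> p * t * (u + t) powr (p - 1)"
  proof (cases "t = 0")
    case False
    with t have "0 < t" by simp
    have "((\<lambda>x. x powr p) has_real_derivative p * x powr (p - 1)) (at x)" if "u \<le> x" for x
      using that u by (intro has_real_derivative_powr) auto
    then obtain z where z: "u < z" "z < u + t" "(u + t) powr p - u powr p = t * (p * z powr (p - 1))"
      using MVT2[of u "u + t" "\<lambda>x. x powr p" "\<lambda>z. p * z powr (p - 1)"] \<open>0 < t\<close> by auto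
    have "u powr (p - 1) \<le> z powr (p - 1)" "z powr (p - 1) \<le> (u + t) powr (p - 1)"
      using z u p by (auto intro: powr_mono2)
    then show ?thesis using z \<open>0 < t\<close> p by (simp add: mult_left_mono mult.assoc mult.left_commute)
  qed simp
  then show "p * t * u powr (p - 1) \<le> (u + t) powr p - u powr p"
    and "(u + t) powr p - u powr p \<le> p * t * (u + t) powr (p - 1)" by auto
qed

lemma powr_add_le_mult:
  fixes x t q :: real
  assumes "1 \<le> x" "0 \<le> t" "0 \<le> q"
  shows "(x + t) powr q \<le> x powr q * (1 + t) powr q"
proof -
  have "x + t \<le> x * (1 + t)" using assms mult_right_mono[of 1 x t] by (simp add: algebra_simps)
  then have "(x + t) powr q \<le> (x * (1 + t)) powr q" using assms by (intro powr_mono2) auto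
  then show ?thesis using assms by (simp add: powr_mult)
qed

lemma powr_le_shift_bound:
  fixes x y z p :: real
  assumes x: "1 \<le> x" and y: "0 \<le> y" and z: "0 < z" "z \<le> x + 2 * y" and p: "1 \<le> p"
  shows "z powr p \<le> x powr p + p * x powr (p - 1) * (1 + 2 * y) powr p"
proof -
  have "z powr p \<le> (x + 2 * y) powr p" using z p by (intro powr_mono2) auto
  also have "\<dots> \<le> x powr p + p * (2 * y) * (x + 2 * y) powr (p - 1)"
    using powr_increment_bounds(2)[of x "2 * y" p] x y p by simp
  also have "\<dots> \<le> x powr p + p * (2 * y) * (x powr (p - 1) * (1 + 2 * y) powr (p - 1))"
    using x y p by (intro add_left_mono mult_left_mono powr_add_le_mult) auto
  also have "\<dots> = x powr p + p * x powr (p - 1) * (2 * y * (1 + 2 * y) powr (p - 1))"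
    by (simp add: mult_ac)
  also have "2 * y * (1 + 2 * y) powr (p - 1) \<le> (1 + 2 * y) * (1 + 2 * y) powr (p - 1)"
    using y by (intro mult_right_mono) auto
  also have "(1 + 2 * y) * (1 + 2 * y) powr (p - 1) = (1 + 2 * y) powr p"
    using y by (simp add: powr_mult_base)
  finally show ?thesis using p by (simp add: mult_left_mono)
qed

lemma powr_plus_lower_le_shift_bound:
  fixes x y z p \<alpha> :: real
  assumes x: "1 \<le> x" and y: "0 \<le> y" and z: "0 < z" "z \<le> x + 2 * y" and p: "1 \<le> p"
    and \<alpha>: "0 \<le> \<alpha>"
  shows "z powr p + \<alpha> * z powr (p - 1)
    \<le> x powr p + x powr (p - 1) * ((p + \<alpha>) * (1 + 2 * y) powr (p + 1))"
proof -
  have grow: "(1 + 2 * y) powr q \<le> (1 + 2 * y) powr (p + 1)" if "q \<le> p + 1" for q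
    using y that by (intro powr_mono) auto
  have "z powr p \<le> x powr p + p * x powr (p - 1) * (1 + 2 * y) powr p"
    using x y z p by (rule powr_le_shift_bound)
  also have "\<dots> \<le> x powr p + p * x powr (p - 1) * (1 + 2 * y) powr (p + 1)"
    using p grow[of p] by (intro add_left_mono mult_left_mono) auto
  finally have main: "z powr p \<le> x powr p + p * x powr (p - 1) * (1 + 2 * y) powr (p + 1)" .
  have "z powr (p - 1) \<le> (x + 2 * y) powr (p - 1)" using z p by (intro powr_mono2) auto
  also have "\<dots> \<le> x powr (p - 1) * (1 + 2 * y) powr (p - 1)"
    using x y p by (intro powr_add_le_mult) auto
  also have "\<dots> \<le> x powr (p - 1) * (1 + 2 * y) powr (p + 1)"
    using grow[of "p - 1"] by (intro mult_left_mono) auto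
  finally have "\<alpha> * z powr (p - 1) \<le> \<alpha> * (x powr (p - 1) * (1 + 2 * y) powr (p + 1))"
    using \<alpha> by (rule mult_left_mono)
  with main show ?thesis by (simp add: algebra_simps)
qed

lemma powr_decrement_bound:
  fixes X y p :: real
  assumes p: "1 \<le> p" and half: "X / 2 \<le> X - y" and y: "0 \<le> y" and X: "0 < X"
  shows "(X - y) powr p + p / 2 powr (p - 1) * X powr (p - 1) * y \<le> X powr p"
proof -
  have "p * y * (X - y) powr (p - 1) \<le> (X - y + y) powr p - (X - y) powr p"
    using half X y p by (intro powr_increment_bounds(1)) auto
  moreover have "X powr (p - 1) / 2 powr (p - 1) \<le> (X - y) powr (p - 1)"
    using half X p powr_mono2[of "p - 1" "X / 2" "X - y"] by (simp add: powr_divide)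
  ultimately have "p * y * (X powr (p - 1) / 2 powr (p - 1)) \<le> X powr p - (X - y) powr p"
    using p y by (smt (verit) mult_left_mono mult_nonneg_nonneg)
  then show ?thesis by (simp add: field_simps)
qed

lemma max_one_powr_le:
  assumes "0 \<le> p"
  shows "real (max (max a b) 1) powr p \<le> 1 + real a powr p + real b powr p"
proof (cases "max a b = 0")
  case False
  then have "max (max a b) 1 = max a b" by (auto simp: max_def)
  moreover have "real (max a b) powr p \<le> real a powr p + real b powr p"
    by (cases "a \<le> b") (auto simp: max_def)
  ultimately show ?thesis by simp
qed simp

lemma one_plus_two_powr_le:
  fixes y :: nat and p :: real
  assumes "0 \<le> p"
  shows "(1 + 2 * real y) powr p \<le> 3 powr p * (1 + real y powr p)"
proof (cases "y = 0")
  case True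
  then show ?thesis using assms by (simp add: ge_one_powr_ge_zero)
next
  case False
  then have "(1 + 2 * real y) powr p \<le> (3 * real y) powr p" using assms by (intro powr_mono2) auto
  also have "\<dots> \<le> 3 powr p * (1 + real y powr p)" by (simp add: powr_mult)
  finally show ?thesis .
qed

lemma ennreal_le_of_add_le_add:
  fixes a b c e :: ennreal
  assumes "a + b \<le> c + e" "e \<le> b" "b < \<infinity>"
  shows "a \<le> c"
proof -
  have "b + a \<le> b + c"
    using order_trans[OF assms(1) add_left_mono[OF assms(2)]] by (simp add: add.commute)
  then show ?thesis using assms(3) by (auto simp: ennreal_add_left_cancel_le)
qed

section \<open>The chain of the two positions\<close>

text \<open>A state \<open>(a, b)\<close> holds the positions of the two walks; the lower one moves next. The
  start \<open>(0, 0)\<close> is not absorbing, since \<open>L\<close> only counts meeting levels \<open>\<ge> 1\<close>.\<close>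
definition absorbed :: "nat \<times> nat \<Rightarrow> bool" where
  "absorbed s \<longleftrightarrow> fst s = snd s \<and> 1 \<le> fst s"

fun advance :: "nat \<times> nat \<Rightarrow> nat \<Rightarrow> nat \<times> nat" where
  "advance (a, b) y = (if a \<le> b then (a + y, b) else (a, b + y))"

definition trans_op :: "nat measure \<Rightarrow> (nat \<times> nat \<Rightarrow> ennreal) \<Rightarrow> nat \<times> nat \<Rightarrow> ennreal" where
  "trans_op mu f s = (if absorbed s then f s else \<integral>\<^sup>+y. f (advance s y) \<partial>mu)"

definition absorbed_above :: "nat \<Rightarrow> nat \<times> nat \<Rightarrow> ennreal" where
  "absorbed_above m s = (if absorbed s \<and> m \<le> fst s then 1 else 0)"

lemma trans_op_absorbed: "absorbed s \<Longrightarrow> trans_op mu f s = f s"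
  by (simp add: trans_op_def)

lemma trans_op_unabsorbed: "\<not> absorbed s \<Longrightarrow> trans_op mu f s = (\<integral>\<^sup>+y. f (advance s y) \<partial>mu)"
  by (simp add: trans_op_def)

lemma trans_op_iter_absorbed: "absorbed s \<Longrightarrow> (trans_op mu ^^ k) f s = f s"
  by (induction k) (auto simp: trans_op_def)

locale jump_law = prob_space mu for mu :: "nat measure" +
  assumes sets_mu: "sets mu = sets (count_space UNIV)"
begin

lemma borel_measurable_jump [measurable]: "f \<in> borel_measurable mu"
  by (simp add: measurable_cong_sets[OF sets_mu refl])

lemma trans_op_mono: "(\<And>s. f s \<le> g s) \<Longrightarrow> trans_op mu f s \<le> trans_op mu g s"
  unfolding trans_op_def by (simp add: nn_integral_mono)

lemma trans_op_add: "trans_op mu (\<lambda>s. f s + g s) s = trans_op mu f s + trans_op mu g s"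
  unfolding trans_op_def by (simp add: nn_integral_add)

lemma trans_op_cmult: "trans_op mu (\<lambda>s. c * f s) s = c * trans_op mu f s"
  unfolding trans_op_def by (simp add: nn_integral_cmult)

lemma trans_op_const: "trans_op mu (\<lambda>_. c) s = c"
  unfolding trans_op_def by (simp add: emeasure_space_1)

lemma trans_op_iter_mono: "(\<And>s. f s \<le> g s) \<Longrightarrow> (trans_op mu ^^ k) f s \<le> (trans_op mu ^^ k) g s"
  by (induction k arbitrary: s) (auto intro: trans_op_mono)

lemma trans_op_iter_add:
  "(trans_op mu ^^ k) (\<lambda>s. f s + g s) s = (trans_op mu ^^ k) f s + (trans_op mu ^^ k) g s"
proof (induction k arbitrary: s)
  case (Suc k)
  have "(trans_op mu ^^ k) (\<lambda>s. f s + g s) = (\<lambda>s. (trans_op mu ^^ k) f s + (trans_op mu ^^ k) g s)"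
    using Suc.IH by auto
  then show ?case by (simp add: trans_op_add)
qed simp

lemma trans_op_iter_cmult: "(trans_op mu ^^ k) (\<lambda>s. c * f s) s = c * (trans_op mu ^^ k) f s"
proof (induction k arbitrary: s)
  case (Suc k)
  have "(trans_op mu ^^ k) (\<lambda>s. c * f s) = (\<lambda>s. c * (trans_op mu ^^ k) f s)"
    using Suc.IH by auto
  then show ?case by (simp add: trans_op_cmult)
qed simp

lemma trans_op_iter_const: "(trans_op mu ^^ k) (\<lambda>_. c) s = c"
proof (induction k arbitrary: s)
  case (Suc k)
  then have "(trans_op mu ^^ k) (\<lambda>_. c) = (\<lambda>_. c)" by auto
  then show ?case by (simp add: trans_op_const)
qed simp

lemma trans_op_ge_atom: "\<not> absorbed s \<Longrightarrow> emeasure mu {y} * f (advance s y) \<le> trans_op mu f s"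
proof -
  assume "\<not> absorbed s"
  have "emeasure mu {y} * f (advance s y) = \<integral>\<^sup>+x. f (advance s y) * indicator {y} x \<partial>mu"
    by (simp add: sets_mu mult.commute)
  also have "\<dots> \<le> \<integral>\<^sup>+x. f (advance s x) \<partial>mu"
    by (intro nn_integral_mono) (auto split: split_indicator)
  finally show ?thesis using \<open>\<not> absorbed s\<close> by (simp add: trans_op_unabsorbed)
qed

lemma trans_op_iter_mono_on:
  assumes steps: "AE y in mu. G y" and invariant: "\<And>s y. S s \<Longrightarrow> G y \<Longrightarrow> S (advance s y)"
    and le: "\<And>s. S s \<Longrightarrow> f s \<le> g s" and "S s"
  shows "(trans_op mu ^^ k) f s \<le> (trans_op mu ^^ k) g s"
  using \<open>S s\<close>
proof (induction k arbitrary: s)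
  case (Suc k)
  show ?case
  proof (cases "absorbed s")
    case False
    have "\<integral>\<^sup>+y. (trans_op mu ^^ k) f (advance s y) \<partial>mu \<le> \<integral>\<^sup>+y. (trans_op mu ^^ k) g (advance s y) \<partial>mu"
      using steps by (intro nn_integral_mono_AE) (auto elim!: eventually_mono intro!: Suc invariant)
    with False show ?thesis by (simp add: trans_op_unabsorbed)
  qed (use Suc le in \<open>simp add: trans_op_iter_absorbed del: funpow.simps\<close>)
qed (use le in simp)

lemma trans_op_iter_increasing:
  assumes sub: "\<And>s. V s \<le> trans_op mu V s" and "m \<le> m'"
  shows "(trans_op mu ^^ m) V s \<le> (trans_op mu ^^ m') V s"
  using \<open>m \<le> m'\<close>
proof (induction m' arbitrary: s rule: dec_induct)
  case (step m')
  have "(trans_op mu ^^ m) V s \<le> (trans_op mu ^^ m') V s" by (rule step.IH)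
  also have "\<dots> \<le> (trans_op mu ^^ m') (trans_op mu V) s" by (intro trans_op_iter_mono sub)
  also have "\<dots> = (trans_op mu ^^ Suc m') V s" by (simp only: funpow_Suc_right comp_def)
  finally show ?case .
qed simp

text \<open>Since \<open>V \<le> P V\<close>, padding \<open>n\<close> steps to consecutive blocks of lengths \<open>k s\<close> only
  increases \<open>P\<^sup>n V\<close>, and each block decreases \<open>W\<close>.\<close>
lemma trans_op_iter_le_supermartingale:
  assumes steps: "AE y in mu. G y" and invariant: "\<And>s y. S s \<Longrightarrow> G y \<Longrightarrow> S (advance s y)"
    and sub: "\<And>s. V s \<le> trans_op mu V s"
    and dom: "\<And>s. S s \<Longrightarrow> V s \<le> W s"
    and super: "\<And>s. S s \<Longrightarrow> \<exists>k\<ge>1. (trans_op mu ^^ k) W s \<le> W s"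
    and "S s"
  shows "(trans_op mu ^^ n) V s \<le> W s"
proof -
  define k where "k s = (SOME k. 1 \<le> k \<and> (trans_op mu ^^ k) W s \<le> W s)" for s
  have k: "1 \<le> k s" "(trans_op mu ^^ k s) W s \<le> W s" if "S s" for s
    using someI_ex[OF super[OF that]] by (auto simp: k_def)
  define Q where "Q f s = (trans_op mu ^^ k s) f s" for f s
  have mono: "(\<And>s. S s \<Longrightarrow> f s \<le> g s) \<Longrightarrow> S s \<Longrightarrow> (trans_op mu ^^ j) f s \<le> (trans_op mu ^^ j) g s"
    for f g s j using trans_op_iter_mono_on[where S = S, OF steps invariant] by blast
  have "(Q ^^ n) V s \<le> W s" if "S s" for s
    using that
  proof (induction n arbitrary: s)
    case (Suc n)
    have "(Q ^^ Suc n) V s = (trans_op mu ^^ k s) ((Q ^^ n) V) s" by (simp add: Q_def)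
    also have "\<dots> \<le> (trans_op mu ^^ k s) W s" by (intro mono Suc)
    also have "\<dots> \<le> W s" by (rule k(2)[OF Suc.prems])
    finally show ?case .
  qed (simp add: dom)
  moreover have "(trans_op mu ^^ n) V s \<le> (Q ^^ n) V s" if "S s" for s
    using that
  proof (induction n arbitrary: s)
    case (Suc n)
    have "(trans_op mu ^^ Suc n) V s \<le> (trans_op mu ^^ (k s + n)) V s"
      using k(1)[OF Suc.prems] by (intro trans_op_iter_increasing sub) simp
    also have "\<dots> = (trans_op mu ^^ k s) ((trans_op mu ^^ n) V) s" by (simp add: funpow_add)
    also have "\<dots> \<le> (trans_op mu ^^ k s) ((Q ^^ n) V) s" by (intro mono Suc)
    also have "\<dots> = (Q ^^ Suc n) V s" by (simp add: Q_def)
    finally show ?case .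
  qed simp
  ultimately show ?thesis using \<open>S s\<close> by (blast intro: order_trans)
qed

definition path_weight :: "nat list \<Rightarrow> real" where
  "path_weight S = (\<Prod>y\<leftarrow>S. measure mu {y})"

definition meeting_path :: "nat \<Rightarrow> nat list \<Rightarrow> nat list \<Rightarrow> bool" where
  "meeting_path d S T \<longleftrightarrow> sum_list S = d + sum_list T \<and> 1 \<le> sum_list S \<and>
     (\<forall>y\<in>set S \<union> set T. 0 < measure mu {y})"

lemma path_weight_nonneg: "0 \<le> path_weight S"
  by (induction S) (auto simp: path_weight_def)

lemma path_weight_le_1: "path_weight S \<le> 1"
  using path_weight_nonneg by (induction S) (auto simp: path_weight_def intro!: mult_le_one)

lemma path_weight_pos: "(\<forall>y\<in>set S. 0 < measure mu {y}) \<Longrightarrow> 0 < path_weight S"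
  by (induction S) (auto simp: path_weight_def)

lemma path_weight_Cons: "ennreal (path_weight (y # S) * w) = emeasure mu {y} * ennreal (path_weight S * w)"
  if "0 \<le> w"
  using that path_weight_nonneg[of S]
  by (simp add: path_weight_def emeasure_eq_measure ennreal_mult[symmetric] mult.assoc)

text \<open>Along a pair of step sequences that make the walks meet, the lower walk is always the one
  that moves, so the chain follows this path with probability at least the product of the atoms.\<close>
lemma path_weight_le_iter_absorbed_above:
  assumes "a + sum_list S = b + sum_list T" "1 \<le> a + sum_list S" "length S + length T \<le> k"
    "m \<le> max a b"
  shows "ennreal (path_weight S * path_weight T) \<le> (trans_op mu ^^ k) (absorbed_above m) (a, b)"
  using assms
proof (induction k arbitrary: a b S T)
  case 0
  then show ?case
    by (simp add: absorbed_def absorbed_above_def path_weight_def trans_op_iter_absorbed)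
next
  case (Suc k)
  show ?case
  proof (cases "absorbed (a, b)")
    case True
    then have "(trans_op mu ^^ Suc k) (absorbed_above m) (a, b) = 1"
      using Suc.prems by (simp add: trans_op_iter_absorbed absorbed_above_def absorbed_def del: funpow.simps)
    then show ?thesis
      by (simp add: mult_le_one path_weight_le_1 path_weight_nonneg)
  next
    case False
    note step = trans_op_ge_atom[OF False, where f = "(trans_op mu ^^ k) (absorbed_above m)"]
    show ?thesis
    proof (cases "a \<le> b")
      case True
      with Suc.prems False obtain y S' where S: "S = y # S'"
        by (cases S) (auto simp: absorbed_def)
      have "ennreal (path_weight S' * path_weight T) \<le> (trans_op mu ^^ k) (absorbed_above m) (a + y, b)"
        using Suc.prems S by (intro Suc.IH) auto
      then have "ennreal (path_weight S * path_weight T)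
          \<le> emeasure mu {y} * (trans_op mu ^^ k) (absorbed_above m) (advance (a, b) y)"
        using True S path_weight_nonneg by (simp add: path_weight_Cons mult_left_mono)
      then show ?thesis using step[of y] by simp
    next
      case False
      with Suc.prems obtain y T' where T: "T = y # T'"
        by (cases T) (auto simp: absorbed_def)
      have "ennreal (path_weight T' * path_weight S) \<le> (trans_op mu ^^ k) (absorbed_above m) (a, b + y)"
        using Suc.prems T by (subst mult.commute) (intro Suc.IH, auto)
      then have "ennreal (path_weight T * path_weight S)
          \<le> emeasure mu {y} * (trans_op mu ^^ k) (absorbed_above m) (advance (a, b) y)"
        using False T path_weight_nonneg by (simp add: path_weight_Cons mult_left_mono)
      then show ?thesis using step[of y] by (simp add: mult.commute)
    qed
  qed
qed

lemma meeting_paths_uniform: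
  assumes "finite D" "\<And>d. d \<in> D \<Longrightarrow> \<exists>S T. meeting_path d S T"
  shows "\<exists>r \<delta>. 0 < \<delta> \<and> (\<forall>d\<in>D. \<exists>S T. meeting_path d S T \<and> length S + length T \<le> r \<and>
           \<delta> \<le> path_weight S * path_weight T)"
  using assms
proof (induction D rule: finite_induct)
  case empty
  show ?case by (intro exI[of _ 0] exI[of _ 1]) simp
next
  case (insert d D)
  then obtain r \<delta> where "0 < \<delta>" and D: "\<forall>d\<in>D. \<exists>S T. meeting_path d S T \<and>
      length S + length T \<le> r \<and> \<delta> \<le> path_weight S * path_weight T"
    by blast
  obtain S T where ST: "meeting_path d S T" using insert.prems by blast
  then have "0 < path_weight S * path_weight T"
    by (auto simp: meeting_path_def intro!: mult_pos_pos path_weight_pos)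
  with \<open>0 < \<delta>\<close> ST D show ?case
    by (intro exI[of _ "max r (length S + length T)"] exI[of _ "min \<delta> (path_weight S * path_weight T)"])
       (fastforce simp: min_le_iff_disj le_max_iff_disj)
qed

end

section \<open>A Lyapunov function\<close>

definition lead :: "nat \<times> nat \<Rightarrow> nat" where
  "lead s = max (fst s) (snd s)"

definition gap :: "nat \<times> nat \<Rightarrow> nat" where
  "gap s = (if fst s \<le> snd s then snd s - fst s else fst s - snd s)"

lemma advance_below_gap: "y < gap s \<Longrightarrow> lead (advance s y) = lead s \<and> gap (advance s y) = gap s - y"
  by (cases s) (auto simp: gap_def lead_def)

lemma advance_gap: "y = gap s \<Longrightarrow> fst (advance s y) = lead s \<and> snd (advance s y) = lead s"
  by (cases s) (auto simp: gap_def lead_def)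

lemma advance_above_gap:
  "gap s < y \<Longrightarrow> lead (advance s y) = lead s + (y - gap s) \<and> gap (advance s y) = y - gap s"
  by (cases s) (auto simp: gap_def lead_def)

lemma gap_le_lead: "gap s \<le> lead s"
  by (auto simp: gap_def lead_def)

lemma lead_le_lead_advance: "lead s \<le> lead (advance s y)"
  by (cases s) (auto simp: lead_def)

lemma absorbed_gap_lead: "absorbed s \<Longrightarrow> gap s = 0 \<and> lead s = fst s"
  by (auto simp: absorbed_def gap_def lead_def)

definition pot :: "real \<Rightarrow> nat \<times> nat \<Rightarrow> real" where
  "pot B s = real (lead s) + real (gap s) + B"

text \<open>The factor 2 makes absorption profitable: a state absorbed at a level \<open>a \<ge> m\<close> still has
  \<open>a\<^sup>p + (m + B)\<^sup>p \<le> 2 pot\<^sup>p\<close>, so being absorbed above the current lead lowers the expected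
  value of \<open>lyap\<close> by \<open>(lead + B)\<^sup>p\<close> times the probability of this event.\<close>
definition lyap :: "real \<Rightarrow> real \<Rightarrow> nat \<times> nat \<Rightarrow> real" where
  "lyap p B s = (if absorbed s then real (fst s) powr p else 2 * pot B s powr p)"

definition lead_powr :: "real \<Rightarrow> nat \<times> nat \<Rightarrow> ennreal" where
  "lead_powr p s = ennreal (real (max (lead s) 1) powr p)"

lemma pot_ge_1: "1 \<le> B \<Longrightarrow> 1 \<le> pot B s"
  by (simp add: pot_def)

lemma pot_advance_le: "pot B (advance s y) \<le> pot B s + 2 * real y"
proof -
  consider "y < gap s" | "y = gap s" | "gap s < y" by linarith
  then show ?thesis
  proof cases
    case 1 then show ?thesis using advance_below_gap[OF 1] by (simp add: pot_def)
  next
    case 2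
    then have "gap (advance s y) = 0" using advance_gap[OF 2] by (simp add: gap_def)
    then show ?thesis using advance_gap[OF 2] by (simp add: pot_def lead_def)
  next
    case 3 then show ?thesis using advance_above_gap[OF 3] by (simp add: pot_def of_nat_diff)
  qed
qed

lemma lyap_le: "1 \<le> B \<Longrightarrow> 0 \<le> p \<Longrightarrow> lyap p B s \<le> 2 * pot B s powr p"
proof (cases "absorbed s")
  case True
  assume "1 \<le> B" "0 \<le> p"
  then have "real (fst s) powr p \<le> pot B s powr p"
    using absorbed_gap_lead[OF True] by (intro powr_mono2) (auto simp: pot_def)
  also have "\<dots> \<le> 2 * pot B s powr p" by simp
  finally show ?thesis using True by (simp add: lyap_def)
qed (simp add: lyap_def)

lemma lyap_nonneg: "0 \<le> lyap p B s"
  by (simp add: lyap_def)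

lemma lead_powr_le_lyap: "1 \<le> B \<Longrightarrow> 0 \<le> p \<Longrightarrow> lead_powr p s \<le> ennreal (lyap p B s)"
proof (cases "absorbed s")
  case True
  then show ?thesis using absorbed_gap_lead[OF True] by (auto simp: lead_powr_def lyap_def absorbed_def)
next
  case False
  assume "1 \<le> B" "0 \<le> p"
  then have "real (max (lead s) 1) powr p \<le> pot B s powr p" by (intro powr_mono2) (auto simp: pot_def)
  also have "\<dots> \<le> 2 * pot B s powr p" by simp
  finally show ?thesis using False by (simp add: lead_powr_def lyap_def)
qed

lemma lyap_le_powr_bound:
  assumes "1 \<le> B" "0 \<le> p"
  shows "lyap p B s \<le> 2 * (2 + B) powr p * (1 + real (fst s) powr p + real (snd s) powr p)"
    (is "_ \<le> _ * ?R")
proof -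
  have "1 \<le> (2 + B) powr p" using assms by (simp add: ge_one_powr_ge_zero)
  have max_le: "real (max (lead s) 1) powr p \<le> 1 + real (fst s) powr p + real (snd s) powr p"
    using max_one_powr_le[OF assms(2)] by (simp add: lead_def)
  have "B \<le> B * real (max (lead s) 1)" using assms by (simp add: mult_le_cancel_left1)
  then have "pot B s \<le> (2 + B) * real (max (lead s) 1)"
    using gap_le_lead[of s] by (simp add: pot_def algebra_simps)
  then have "pot B s powr p \<le> ((2 + B) * real (max (lead s) 1)) powr p"
    using assms by (intro powr_mono2) (auto simp: pot_def)
  also have "\<dots> = (2 + B) powr p * real (max (lead s) 1) powr p" using assms by (simp add: powr_mult)
  also have "\<dots> \<le> (2 + B) powr p * (1 + real (fst s) powr p + real (snd s) powr p)"
    using max_le by (intro mult_left_mono) auto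
  finally have unabsorbed: "2 * pot B s powr p \<le> 2 * (2 + B) powr p * ?R"
    by simp
  have "real (fst s) powr p \<le> 1 * ?R" by simp
  also have "\<dots> \<le> 2 * (2 + B) powr p * ?R"
    using \<open>1 \<le> (2 + B) powr p\<close> by (intro mult_right_mono) auto
  finally show ?thesis using unabsorbed by (simp add: lyap_def)
qed

lemma small_gap_powr_bound:
  fixes X M B K \<alpha> \<delta> p :: real
  assumes "1 \<le> B" "0 \<le> M" "0 \<le> K" "0 < X" "X \<le> M + B + K" "1 \<le> p" "0 \<le> \<alpha>" "0 < \<delta>"
    and choice_of_B: "2 * \<alpha> * (1 + K) powr (p - 1) \<le> \<delta> * B"
  shows "2 * \<alpha> * X powr (p - 1) \<le> \<delta> * (M + B) powr p"
proof -
  have "X \<le> (1 + K) * (M + B)"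
    using assms mult_left_mono[of 1 "M + B" K] by (simp add: algebra_simps)
  then have "X powr (p - 1) \<le> ((1 + K) * (M + B)) powr (p - 1)"
    using assms by (intro powr_mono2) auto
  also have "\<dots> = (1 + K) powr (p - 1) * (M + B) powr (p - 1)"
    using assms by (simp add: powr_mult)
  finally have "2 * \<alpha> * X powr (p - 1) \<le> (2 * \<alpha> * (1 + K) powr (p - 1)) * (M + B) powr (p - 1)"
    using assms by (simp add: mult_left_mono)
  also have "\<dots> \<le> (\<delta> * (M + B)) * (M + B) powr (p - 1)"
    using assms mult_left_mono[of B "M + B" \<delta>]
    by (intro mult_right_mono order_trans[OF choice_of_B]) auto
  also have "\<dots> = \<delta> * (M + B) powr p"
    using assms by (simp add: powr_mult_base)
  finally show ?thesis .
qed

lemma lyap_plus_absorbed_above_le: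
  assumes "1 \<le> B" "1 \<le> p"
  shows "ennreal (lyap p B s) + ennreal ((real m + B) powr p) * absorbed_above m s
    \<le> 2 * ennreal (pot B s powr p)"
proof (cases "absorbed s \<and> m \<le> fst s")
  case True
  then have pot: "pot B s = real (fst s) + B" using absorbed_gap_lead by (simp add: pot_def)
  have "real (fst s) powr p \<le> pot B s powr p" "(real m + B) powr p \<le> pot B s powr p"
    using True assms by (auto simp: pot intro!: powr_mono2)
  then have "ennreal (real (fst s) powr p + (real m + B) powr p) \<le> ennreal (2 * pot B s powr p)"
    by (intro ennreal_leI) simp
  then show ?thesis
    using True by (simp add: lyap_def absorbed_above_def ennreal_plus[symmetric] ennreal_mult del: ennreal_plus)
next
  case False
  have "ennreal (lyap p B s) \<le> ennreal (2 * pot B s powr p)"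
    using lyap_le[of B p s] assms by (intro ennreal_leI) simp
  then show ?thesis using False by (auto simp: absorbed_above_def ennreal_mult)
qed

lemma lyap_advance_bound:
  fixes B p :: real
  assumes B: "1 \<le> B" and p: "1 \<le> p" and "\<not> absorbed s" and "1 \<le> gap s"
  defines "X \<equiv> pot B s"
  shows "lyap p B (advance s y) + 2 * (p / 2 powr (p - 1)) * X powr (p - 1) * (if y \<le> gap s then real y else 0)
    \<le> 2 * X powr p + 2 * p * X powr (p - 1) * (if gap s < y then (1 + 2 * real y) powr p else 0)"
proof -
  have X1: "1 \<le> X" using B by (simp add: X_def pot_def)
  have decrease: "(X - real y) powr p + p / 2 powr (p - 1) * X powr (p - 1) * real y \<le> X powr p"
    if "y \<le> gap s"
    using that p X1 gap_le_lead[of s] B by (intro powr_decrement_bound) (auto simp: X_def pot_def)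
  have below_gap: "lyap p B (advance s y) + 2 * (p / 2 powr (p - 1)) * X powr (p - 1) * real y \<le> 2 * X powr p"
    if "y \<le> gap s" "lyap p B (advance s y) \<le> 2 * (X - real y) powr p"
    using decrease[OF that(1)] that(2) by linarith
  consider "y < gap s" | "y = gap s" | "gap s < y" by linarith
  then show ?thesis
  proof cases
    case 1
    have "\<not> absorbed (advance s y)" "pot B (advance s y) = X - real y"
      using advance_below_gap[OF 1] absorbed_gap_lead[of "advance s y"] 1
      by (auto simp: X_def pot_def of_nat_diff)
    then show ?thesis using below_gap 1 by (simp add: lyap_def)
  next
    case 2
    have "absorbed (advance s y)"
      using advance_gap[OF 2] \<open>1 \<le> gap s\<close> gap_le_lead[of s] by (simp add: absorbed_def)
    then have "lyap p B (advance s y) = real (lead s) powr p"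
      using advance_gap[OF 2] by (simp add: lyap_def)
    also have "\<dots> \<le> (X - real y) powr p"
      using 2 B p by (intro powr_mono2) (auto simp: X_def pot_def)
    also have "\<dots> \<le> 2 * (X - real y) powr p" by simp
    finally show ?thesis using below_gap 2 by simp
  next
    case 3
    have "lyap p B (advance s y) \<le> 2 * pot B (advance s y) powr p"
      using lyap_le B p by simp
    also have "pot B (advance s y) powr p \<le> X powr p + p * X powr (p - 1) * (1 + 2 * real y) powr p"
      using advance_above_gap[OF 3] 3 B p
      by (intro powr_le_shift_bound) (auto simp: X_def pot_def of_nat_diff)
    finally show ?thesis using 3 by (simp add: algebra_simps)
  qed
qed

locale moment_jump_law = jump_law +
  fixes p :: real
  assumes p_ge_1: "1 \<le> p"
    and moment_finite: "(\<integral>\<^sup>+y. ennreal (real y powr (p + 1)) \<partial>mu) < \<infinity>"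
begin

lemma shifted_moment_finite: "(\<integral>\<^sup>+y. ennreal ((1 + 2 * real y) powr (p + 1)) \<partial>mu) < \<infinity>"
proof -
  have "ennreal ((1 + 2 * real y) powr (p + 1)) \<le> ennreal (3 powr (p + 1) * (1 + real y powr (p + 1)))"
    for y :: nat
    using one_plus_two_powr_le[of "p + 1"] p_ge_1 by (intro ennreal_leI) simp
  also have "ennreal (3 powr (p + 1) * (1 + real y powr (p + 1)))
      = ennreal (3 powr (p + 1)) * (1 + ennreal (real y powr (p + 1)))" for y :: nat
    by (simp add: ennreal_mult ennreal_plus)
  finally have "(\<integral>\<^sup>+y. ennreal ((1 + 2 * real y) powr (p + 1)) \<partial>mu)
      \<le> (\<integral>\<^sup>+y. ennreal (3 powr (p + 1)) * (1 + ennreal (real y powr (p + 1))) \<partial>mu)"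
    by (intro nn_integral_mono)
  also have "\<dots> = ennreal (3 powr (p + 1)) * (1 + (\<integral>\<^sup>+y. ennreal (real y powr (p + 1)) \<partial>mu))"
    by (simp add: nn_integral_cmult nn_integral_add emeasure_space_1)
  also have "\<dots> < \<infinity>"
    using moment_finite by (simp add: ennreal_mult_less_top)
  finally show ?thesis .
qed

definition mom :: real where
  "mom = enn2real (\<integral>\<^sup>+y. ennreal ((1 + 2 * real y) powr (p + 1)) \<partial>mu)"

lemma ennreal_mom: "(\<integral>\<^sup>+y. ennreal ((1 + 2 * real y) powr (p + 1)) \<partial>mu) = ennreal mom"
  unfolding mom_def using shifted_moment_finite by (simp add: ennreal_enn2real_if)

lemma mom_nonneg: "0 \<le> mom"
  by (simp add: mom_def)

lemma nn_integral_overshoot_le: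
  "(\<integral>\<^sup>+y. ennreal (if d < y then (1 + 2 * real y) powr p else 0) \<partial>mu) \<le> ennreal (mom / (1 + 2 * real d))"
proof -
  have "(if d < y then (1 + 2 * real y) powr p else 0) \<le> 1 / (1 + 2 * real d) * (1 + 2 * real y) powr (p + 1)"
    for y
  proof (cases "d < y")
    case True
    have "(1 + 2 * real y) powr p * (1 + 2 * real d) \<le> (1 + 2 * real y) powr p * (1 + 2 * real y)"
      using True by (intro mult_left_mono) auto
    also have "\<dots> = (1 + 2 * real y) powr (p + 1)" by (simp add: powr_add)
    finally show ?thesis using True by (simp add: field_simps)
  qed simp
  then have "(\<integral>\<^sup>+y. ennreal (if d < y then (1 + 2 * real y) powr p else 0) \<partial>mu)
      \<le> (\<integral>\<^sup>+y. ennreal (1 / (1 + 2 * real d)) * ennreal ((1 + 2 * real y) powr (p + 1)) \<partial>mu)"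
    by (intro nn_integral_mono) (simp add: ennreal_mult[symmetric] ennreal_leI)
  also have "\<dots> = ennreal (1 / (1 + 2 * real d)) * ennreal mom"
    by (simp add: nn_integral_cmult ennreal_mom)
  also have "\<dots> = ennreal (mom / (1 + 2 * real d))"
    using mom_nonneg by (simp add: ennreal_mult[symmetric])
  finally show ?thesis .
qed

lemma one_le_mom: "1 \<le> mom"
proof -
  have "(\<integral>\<^sup>+y. 1 \<partial>mu) \<le> (\<integral>\<^sup>+y. ennreal ((1 + 2 * real y) powr (p + 1)) \<partial>mu)"
    using p_ge_1 by (intro nn_integral_mono) (simp add: ge_one_powr_ge_zero)
  then show ?thesis by (simp add: ennreal_mom emeasure_space_1)
qed

lemma trans_op_pot_powr_le:
  assumes "1 \<le> B" "0 \<le> \<alpha>" and f: "\<And>s. f s \<le> ennreal (pot B s powr p + \<alpha> * pot B s powr (p - 1))"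
  shows "trans_op mu f s \<le> ennreal (pot B s powr p + (p + \<alpha>) * mom * pot B s powr (p - 1))"
proof (cases "absorbed s")
  case True
  have "\<alpha> * 1 \<le> (p + \<alpha>) * mom" using one_le_mom p_ge_1 \<open>0 \<le> \<alpha>\<close> by (intro mult_mono) auto
  then have "\<alpha> * pot B s powr (p - 1) \<le> (p + \<alpha>) * mom * pot B s powr (p - 1)"
    by (intro mult_right_mono) simp_all
  then show ?thesis
    using f[of s] True by (simp add: trans_op_absorbed) (meson add_left_mono ennreal_leI order_trans)
next
  case False
  let ?x = "pot B s"
  have "f (advance s y)
      \<le> ennreal (?x powr p) + ennreal (?x powr (p - 1) * (p + \<alpha>)) * ennreal ((1 + 2 * real y) powr (p + 1))"
    for y
  proof -
    have "f (advance s y) \<le> ennreal (pot B (advance s y) powr p + \<alpha> * pot B (advance s y) powr (p - 1))"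
      by (rule f)
    also have "\<dots> \<le> ennreal (?x powr p + ?x powr (p - 1) * ((p + \<alpha>) * (1 + 2 * real y) powr (p + 1)))"
      using pot_ge_1[OF \<open>1 \<le> B\<close>, of s] pot_ge_1[OF \<open>1 \<le> B\<close>, of "advance s y"] pot_advance_le[of B s y]
        p_ge_1 \<open>0 \<le> \<alpha>\<close>
      by (intro ennreal_leI powr_plus_lower_le_shift_bound) auto
    also have "\<dots> = ennreal (?x powr p) + ennreal (?x powr (p - 1) * (p + \<alpha>)) * ennreal ((1 + 2 * real y) powr (p + 1))"
      using \<open>0 \<le> \<alpha>\<close> p_ge_1 by (simp add: ennreal_plus[symmetric] ennreal_mult[symmetric] mult_ac del: ennreal_plus)
    finally show ?thesis .
  qed
  then have "trans_op mu f s
      \<le> \<integral>\<^sup>+y. ennreal (?x powr p) + ennreal (?x powr (p - 1) * (p + \<alpha>)) * ennreal ((1 + 2 * real y) powr (p + 1)) \<partial>mu"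
    using False by (simp add: trans_op_unabsorbed nn_integral_mono)
  also have "\<dots> = ennreal (?x powr p) + ennreal (?x powr (p - 1) * (p + \<alpha>)) * ennreal mom"
    by (simp add: nn_integral_add nn_integral_cmult ennreal_mom emeasure_space_1)
  also have "\<dots> = ennreal (?x powr p + (p + \<alpha>) * mom * ?x powr (p - 1))"
    using \<open>0 \<le> \<alpha>\<close> p_ge_1 mom_nonneg
    by (simp add: ennreal_plus[symmetric] ennreal_mult[symmetric] mult_ac del: ennreal_plus)
  finally show ?thesis .
qed

lemma trans_op_iter_pot_powr_le:
  "\<exists>\<alpha>\<ge>0. \<forall>B s. 1 \<le> B \<longrightarrow> (trans_op mu ^^ k) (\<lambda>s. ennreal (pot B s powr p)) s
     \<le> ennreal (pot B s powr p + \<alpha> * pot B s powr (p - 1))"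
proof (induction k)
  case (Suc k)
  then obtain \<alpha> where "0 \<le> \<alpha>" and IH: "\<And>B s. 1 \<le> B \<Longrightarrow> (trans_op mu ^^ k) (\<lambda>s. ennreal (pot B s powr p)) s
      \<le> ennreal (pot B s powr p + \<alpha> * pot B s powr (p - 1))"
    by blast
  then show ?case
    using trans_op_pot_powr_le[OF _ \<open>0 \<le> \<alpha>\<close> IH] p_ge_1 mom_nonneg
    by (intro exI[of _ "(p + \<alpha>) * mom"]) auto
qed (intro exI[of _ 0], simp)

lemma overshoot_le_gain:
  fixes y\<^sub>0 d :: nat and c :: real
  assumes "y\<^sub>0 \<le> d" "0 \<le> c"
    and large_gap: "2 powr (p - 1) * mom \<le> real y\<^sub>0 * measure mu {y\<^sub>0} * (1 + 2 * real d)"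
  shows "ennreal (2 powr (p - 1) * c) * (\<integral>\<^sup>+y. ennreal (if d < y then (1 + 2 * real y) powr p else 0) \<partial>mu)
    \<le> ennreal c * (\<integral>\<^sup>+y. ennreal (if y \<le> d then real y else 0) \<partial>mu)"
proof -
  have "2 powr (p - 1) * mom / (1 + 2 * real d) \<le> real y\<^sub>0 * measure mu {y\<^sub>0}"
    using large_gap by (simp add: field_simps)
  then have "c * (2 powr (p - 1) * mom / (1 + 2 * real d)) \<le> c * (real y\<^sub>0 * measure mu {y\<^sub>0})"
    using \<open>0 \<le> c\<close> by (rule mult_left_mono)
  then have "2 powr (p - 1) * c * (mom / (1 + 2 * real d)) \<le> c * (real y\<^sub>0 * measure mu {y\<^sub>0})"
    by (simp add: mult_ac)
  then have balance: "ennreal (2 powr (p - 1) * c * (mom / (1 + 2 * real d)))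
      \<le> ennreal (c * (real y\<^sub>0 * measure mu {y\<^sub>0}))"
    by (rule ennreal_leI)
  have "ennreal (real y\<^sub>0 * measure mu {y\<^sub>0}) = \<integral>\<^sup>+y. ennreal (real y\<^sub>0) * indicator {y\<^sub>0} y \<partial>mu"
    by (simp add: sets_mu emeasure_eq_measure ennreal_mult)
  also have "\<dots> \<le> \<integral>\<^sup>+y. ennreal (if y \<le> d then real y else 0) \<partial>mu"
    using \<open>y\<^sub>0 \<le> d\<close> by (intro nn_integral_mono) (auto split: split_indicator)
  finally have gain: "ennreal (real y\<^sub>0 * measure mu {y\<^sub>0}) \<le> \<integral>\<^sup>+y. ennreal (if y \<le> d then real y else 0) \<partial>mu" .
  have "ennreal (2 powr (p - 1) * c) * (\<integral>\<^sup>+y. ennreal (if d < y then (1 + 2 * real y) powr p else 0) \<partial>mu)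
      \<le> ennreal (2 powr (p - 1) * c) * ennreal (mom / (1 + 2 * real d))"
    by (intro mult_left_mono nn_integral_overshoot_le) simp
  also have "\<dots> = ennreal (2 powr (p - 1) * c * (mom / (1 + 2 * real d)))"
    using \<open>0 \<le> c\<close> mom_nonneg by (intro ennreal_mult[symmetric]) auto
  also have "\<dots> \<le> ennreal (c * (real y\<^sub>0 * measure mu {y\<^sub>0}))"
    by (rule balance)
  also have "\<dots> = ennreal c * ennreal (real y\<^sub>0 * measure mu {y\<^sub>0})"
    using \<open>0 \<le> c\<close> by (intro ennreal_mult) auto
  also have "\<dots> \<le> ennreal c * (\<integral>\<^sup>+y. ennreal (if y \<le> d then real y else 0) \<partial>mu)"
    by (intro mult_left_mono gain) simp
  finally show ?thesis .
qed

text \<open>Steps shorter than the gap lower the Lyapunov function; an atom \<open>y\<^sub>0\<close> below the gap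
  yields a gain of order \<open>pot\<^sup>p\<^sup>-\<^sup>1\<close>, while steps beyond the gap, by the moment bound, cost
  at most order \<open>pot\<^sup>p\<^sup>-\<^sup>1 / gap\<close>.\<close>
lemma lyap_one_step_decrease:
  fixes B :: real and y\<^sub>0 :: nat
  assumes B: "1 \<le> B" and na: "\<not> absorbed s" and "1 \<le> gap s" and "y\<^sub>0 \<le> gap s"
    and large_gap: "2 powr (p - 1) * mom \<le> real y\<^sub>0 * measure mu {y\<^sub>0} * (1 + 2 * real (gap s))"
  shows "trans_op mu (\<lambda>s. ennreal (lyap p B s)) s \<le> ennreal (lyap p B s)"
proof -
  define X where "X = pot B s"
  define c where "c = 2 * (p / 2 powr (p - 1)) * X powr (p - 1)"
  define g where "g y = ennreal (if y \<le> gap s then real y else 0)" for y :: nat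
  define h where "h y = ennreal (if gap s < y then (1 + 2 * real y) powr p else 0)" for y :: nat
  have "c \<ge> 0" using p_ge_1 by (simp add: c_def)
  have c': "2 powr (p - 1) * c = 2 * p * X powr (p - 1)" by (simp add: c_def)
  have "ennreal (lyap p B (advance s y)) + ennreal c * g y
      \<le> ennreal (2 * X powr p) + ennreal (2 powr (p - 1) * c) * h y" for y
    using lyap_advance_bound[OF B p_ge_1 na \<open>1 \<le> gap s\<close>, of y] \<open>c \<ge> 0\<close> p_ge_1 lyap_nonneg[of p B]
    unfolding g_def h_def c' unfolding c_def X_def
    by (simp add: ennreal_plus[symmetric] ennreal_mult[symmetric] del: ennreal_plus)
  then have "\<integral>\<^sup>+y. ennreal (lyap p B (advance s y)) + ennreal c * g y \<partial>mu
      \<le> \<integral>\<^sup>+y. ennreal (2 * X powr p) + ennreal (2 powr (p - 1) * c) * h y \<partial>mu"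
    by (rule nn_integral_mono)
  then have "trans_op mu (\<lambda>s. ennreal (lyap p B s)) s + ennreal c * (\<integral>\<^sup>+y. g y \<partial>mu)
      \<le> \<integral>\<^sup>+y. ennreal (2 * X powr p) + ennreal (2 powr (p - 1) * c) * h y \<partial>mu"
    using na by (simp add: trans_op_unabsorbed nn_integral_add nn_integral_cmult)
  also have "\<dots> = ennreal (2 * X powr p) + ennreal (2 powr (p - 1) * c) * (\<integral>\<^sup>+y. h y \<partial>mu)"
    by (simp add: nn_integral_add nn_integral_cmult emeasure_space_1)
  finally have main: "trans_op mu (\<lambda>s. ennreal (lyap p B s)) s + ennreal c * (\<integral>\<^sup>+y. g y \<partial>mu)
      \<le> ennreal (2 * X powr p) + ennreal (2 powr (p - 1) * c) * (\<integral>\<^sup>+y. h y \<partial>mu)" .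
  have "(\<integral>\<^sup>+y. g y \<partial>mu) \<le> (\<integral>\<^sup>+y. ennreal (real (gap s)) \<partial>mu)"
    by (intro nn_integral_mono) (auto simp: g_def)
  also have "\<dots> < \<infinity>" by (simp add: emeasure_space_1)
  finally have "ennreal c * (\<integral>\<^sup>+y. g y \<partial>mu) < \<infinity>" by (simp add: ennreal_mult_less_top)
  with main overshoot_le_gain[OF \<open>y\<^sub>0 \<le> gap s\<close> \<open>c \<ge> 0\<close> large_gap]
  have "trans_op mu (\<lambda>s. ennreal (lyap p B s)) s \<le> ennreal (2 * X powr p)"
    unfolding g_def h_def by (rule ennreal_le_of_add_le_add)
  then show ?thesis using na by (simp add: lyap_def X_def)
qed

lemma lyap_iter_decrease_small_gap:
  fixes B \<alpha> \<delta> K :: real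
  assumes B: "1 \<le> B" and na: "\<not> absorbed s" and small_gap: "real (gap s) \<le> K"
    and "0 \<le> \<alpha>" and pot_bound: "\<And>s. (trans_op mu ^^ r) (\<lambda>s. ennreal (pot B s powr p)) s
      \<le> ennreal (pot B s powr p + \<alpha> * pot B s powr (p - 1))"
    and reach: "ennreal \<delta> \<le> (trans_op mu ^^ r) (absorbed_above (lead s)) s" and "0 < \<delta>"
    and choice_of_B: "2 * \<alpha> * (1 + K) powr (p - 1) \<le> \<delta> * B"
  shows "(trans_op mu ^^ r) (\<lambda>s. ennreal (lyap p B s)) s \<le> ennreal (lyap p B s)"
proof -
  define X where "X = pot B s"
  define Q where "Q = (real (lead s) + B) powr p"
  let ?A = "(trans_op mu ^^ r) (absorbed_above (lead s)) s"
  have "(trans_op mu ^^ r) (\<lambda>s. ennreal (lyap p B s)) s + ennreal Q * ?A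
      = (trans_op mu ^^ r) (\<lambda>s'. ennreal (lyap p B s') + ennreal Q * absorbed_above (lead s) s') s"
    by (simp add: trans_op_iter_add trans_op_iter_cmult)
  also have "\<dots> \<le> (trans_op mu ^^ r) (\<lambda>s'. 2 * ennreal (pot B s' powr p)) s"
    unfolding Q_def by (intro trans_op_iter_mono lyap_plus_absorbed_above_le B p_ge_1)
  also have "\<dots> = 2 * (trans_op mu ^^ r) (\<lambda>s'. ennreal (pot B s' powr p)) s"
    by (rule trans_op_iter_cmult)
  also have "\<dots> \<le> 2 * ennreal (X powr p + \<alpha> * X powr (p - 1))"
    unfolding X_def by (intro mult_left_mono pot_bound) simp
  also have "\<dots> = ennreal (2 * X powr p) + ennreal (2 * \<alpha> * X powr (p - 1))"
    using \<open>0 \<le> \<alpha>\<close> by (simp add: ennreal_mult ennreal_plus distrib_left mult.assoc)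
  finally have main: "(trans_op mu ^^ r) (\<lambda>s. ennreal (lyap p B s)) s + ennreal Q * ?A
      \<le> ennreal (2 * X powr p) + ennreal (2 * \<alpha> * X powr (p - 1))" .
  have "2 * \<alpha> * X powr (p - 1) \<le> \<delta> * Q"
    unfolding X_def Q_def
    using B small_gap p_ge_1 \<open>0 \<le> \<alpha>\<close> \<open>0 < \<delta>\<close> choice_of_B pot_ge_1[OF B, of s]
    by (intro small_gap_powr_bound) (auto simp: pot_def intro: order_trans[OF of_nat_0_le_iff])
  then have "ennreal (2 * \<alpha> * X powr (p - 1)) \<le> ennreal (\<delta> * Q)"
    by (rule ennreal_leI)
  also have "\<dots> = ennreal Q * ennreal \<delta>"
    using \<open>0 < \<delta>\<close> by (subst mult.commute) (intro ennreal_mult, auto simp: Q_def)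
  also have "\<dots> \<le> ennreal Q * ?A"
    by (intro mult_left_mono reach) simp
  finally have gain: "ennreal (2 * \<alpha> * X powr (p - 1)) \<le> ennreal Q * ?A" .
  have "?A \<le> (trans_op mu ^^ r) (\<lambda>_. 1) s"
    by (intro trans_op_iter_mono) (simp add: absorbed_above_def)
  then have "?A \<le> 1" by (simp add: trans_op_iter_const)
  then have "ennreal Q * ?A < \<infinity>"
    by (simp add: ennreal_mult_less_top le_less_trans[OF _ ennreal_one_less_top])
  with main gain have "(trans_op mu ^^ r) (\<lambda>s. ennreal (lyap p B s)) s \<le> ennreal (2 * X powr p)"
    by (rule ennreal_le_of_add_le_add)
  then show ?thesis using na by (simp add: lyap_def X_def)
qed

end

section \<open>The lattice generated by the atoms\<close>

context jump_law
begin

lemma AE_imp_atom: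
  assumes "0 < measure mu {y}" "AE x in mu. P x"
  shows "P y"
proof (rule ccontr)
  assume "\<not> P y"
  let ?N = "{x \<in> space mu. \<not> P x}"
  have "?N \<in> sets mu" by (simp add: sets_mu)
  then have "emeasure mu ?N = 0" using assms(2) AE_iff_measurable[of ?N mu P] by simp
  moreover have "{y} \<subseteq> ?N" using \<open>\<not> P y\<close> by (simp add: sets_eq_imp_space_eq[OF sets_mu])
  ultimately have "emeasure mu {y} = 0" using emeasure_mono[of "{y}" ?N mu] \<open>?N \<in> sets mu\<close> by simp
  then show False using assms(1) by (simp add: emeasure_eq_measure)
qed

lemma AE_atom: "AE y in mu. 0 < measure mu {y}"
proof -
  have "AE y in mu. y \<notin> {y. \<not> 0 < measure mu {y}}"
    by (intro AE_discrete_difference) (auto simp: sets_mu emeasure_eq_measure not_less measure_le_0_iff)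
  then show ?thesis by simp
qed

lemma ex_atom: "\<exists>y. 0 < measure mu {y}"
proof (rule ccontr)
  assume "\<nexists>y. 0 < measure mu {y}"
  then have "AE y in mu. False" using AE_atom by simp
  then show False by simp
qed

definition atom_diffs :: "int set" where
  "atom_diffs = {int (sum_list S) - int (sum_list T) | S T. \<forall>y\<in>set S \<union> set T. 0 < measure mu {y}}"

lemma atom_diffs_add: "x \<in> atom_diffs \<Longrightarrow> x' \<in> atom_diffs \<Longrightarrow> x + x' \<in> atom_diffs"
  unfolding atom_diffs_def by clarify (rule_tac x="S @ Sa" in exI, rule_tac x="T @ Ta" in exI, auto)

lemma atom_diffs_uminus: "x \<in> atom_diffs \<Longrightarrow> - x \<in> atom_diffs"
  unfolding atom_diffs_def by clarify (rule_tac x=T in exI, rule_tac x=S in exI, auto)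

lemma atom_in_atom_diffs: "0 < measure mu {y} \<Longrightarrow> int y \<in> atom_diffs"
  unfolding atom_diffs_def by (rule CollectI, rule exI[of _ "[y]"], rule exI[of _ "[]"]) simp

lemma atom_diffs_mult: "x \<in> atom_diffs \<Longrightarrow> q * x \<in> atom_diffs"
proof -
  assume x: "x \<in> atom_diffs"
  have zero: "0 \<in> atom_diffs"
    unfolding atom_diffs_def by (rule CollectI, rule exI[of _ "[]"], rule exI[of _ "[]"]) simp
  have nat_mult: "int n * x \<in> atom_diffs" for n
    by (induction n) (auto simp: zero distrib_right x intro: atom_diffs_add)
  show ?thesis
    using nat_mult[of "nat q"] atom_diffs_uminus[OF nat_mult[of "nat (- q)"]]
    by (cases "0 \<le> q") auto
qed

lemma atom_diffs_dvd:
  assumes atoms: "\<And>y. 0 < measure mu {y} \<Longrightarrow> h dvd y" and "x \<in> atom_diffs"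
  shows "int h dvd x"
proof -
  obtain S T where x: "x = int (sum_list S) - int (sum_list T)"
    and ST: "\<forall>y\<in>set S \<union> set T. 0 < measure mu {y}"
    using \<open>x \<in> atom_diffs\<close> unfolding atom_diffs_def by blast
  have sum_dvd: "h dvd sum_list xs" if "\<forall>y\<in>set xs. 0 < measure mu {y}" for xs
    using that atoms by (induction xs) auto
  have "h dvd sum_list S" "h dvd sum_list T" using ST by (auto intro: sum_dvd)
  then show ?thesis unfolding x by (simp add: int_dvd_int_iff dvd_diff)
qed

end

locale positive_jump_law = jump_law +
  assumes steps_pos: "AE y in mu. 1 \<le> y"
begin

abbreviation step_span :: nat where
  "step_span \<equiv> span mu (\<lambda>y. y)"

lemma atom_ge_1: "0 < measure mu {y} \<Longrightarrow> 1 \<le> y"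
  using AE_imp_atom steps_pos by blast

lemma span_candidate_le_atom:
  assumes "0 < measure mu {y}" "0 < h \<and> (AE y in mu. \<exists>k\<ge>1. y = h * k)"
  shows "h \<le> y"
proof -
  obtain k where "1 \<le> k" "y = h * k"
    using AE_imp_atom[OF assms(1), of "\<lambda>y. \<exists>k\<ge>1. y = h * k"] assms(2) by blast
  then show ?thesis by simp
qed

lemma step_span_spec: "0 < step_span \<and> (AE y in mu. \<exists>k\<ge>1. y = step_span * k)"
proof -
  obtain y where y: "0 < measure mu {y}" using ex_atom by blast
  have "0 < (1::nat) \<and> (AE y in mu. \<exists>k\<ge>1. y = 1 * k)"
    using steps_pos by (auto elim!: eventually_mono)
  then show ?thesis unfolding span_def by (rule GreatestI_nat[OF _ span_candidate_le_atom[OF y]])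
qed

lemma step_span_dvd_AE: "AE y in mu. step_span dvd y"
  using step_span_spec by (auto elim!: eventually_mono)

text \<open>The least positive element of the group generated by the atoms divides every atom, so it
  is at most the span; conversely the span divides it.\<close>
lemma step_span_in_atom_diffs: "int step_span \<in> atom_diffs"
proof -
  define g where "g = (LEAST g. 0 < g \<and> int g \<in> atom_diffs)"
  obtain y where y: "0 < measure mu {y}" using ex_atom by blast
  then have "0 < y \<and> int y \<in> atom_diffs" using atom_ge_1[OF y] atom_in_atom_diffs[OF y] by simp
  then have g: "0 < g" "int g \<in> atom_diffs"
    unfolding g_def by (metis (mono_tags, lifting) LeastI)+
  have least: "g \<le> g'" if "0 < g'" "int g' \<in> atom_diffs" for g'
    unfolding g_def using that by (intro Least_le) simp
  have g_dvd: "int g dvd x" if "x \<in> atom_diffs" for x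
  proof (rule ccontr)
    assume "\<not> int g dvd x"
    then have pos: "0 < x mod int g" using g(1) by (simp add: dvd_eq_mod_eq_0 order_le_neq_trans)
    have "x mod int g = x + (- (x div int g)) * int g" by (simp add: minus_div_mult_eq_mod[symmetric])
    also have "\<dots> \<in> atom_diffs" using that g by (intro atom_diffs_add atom_diffs_mult)
    finally have "g \<le> nat (x mod int g)"
      using pos by (intro least) auto
    moreover have "x mod int g < int g" using g(1) by simp
    ultimately show False using pos by (simp add: le_nat_iff)
  qed
  have "AE y in mu. \<exists>k\<ge>1. y = g * k"
    using AE_atom steps_pos
  proof eventually_elim
    case (elim y)
    obtain k where "y = g * k" using g_dvd[OF atom_in_atom_diffs[OF elim(1)]] by (auto simp: int_dvd_int_iff)
    with elim(2) show ?case by (cases k) auto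
  qed
  then have "g \<le> step_span"
    unfolding span_def using g(1) span_candidate_le_atom[OF y] by (intro Greatest_le_nat) auto
  moreover have "step_span dvd g"
    using atom_diffs_dvd[OF _ g(2)] AE_imp_atom[OF _ step_span_dvd_AE] by (simp add: int_dvd_int_iff)
  ultimately have "g = step_span" using g(1) by (simp add: dvd_imp_le le_antisym)
  then show ?thesis using g(2) by simp
qed

lemma meeting_path_of_step_span_dvd:
  assumes "step_span dvd d"
  shows "\<exists>S T. meeting_path d S T"
proof (cases "d = 0")
  case True
  obtain y where "0 < measure mu {y}" using ex_atom by blast
  with True show ?thesis
    using atom_ge_1 by (intro exI[of _ "[y]"] exI[of _ "[y]"]) (auto simp: meeting_path_def)
next
  case False
  from assms obtain q where "d = step_span * q" by (rule dvdE)
  then have "int d = int q * int step_span" by simp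
  also have "\<dots> \<in> atom_diffs" by (intro atom_diffs_mult step_span_in_atom_diffs)
  finally obtain S T where "int d = int (sum_list S) - int (sum_list T)"
    "\<forall>y\<in>set S \<union> set T. 0 < measure mu {y}"
    unfolding atom_diffs_def by blast
  with False show ?thesis by (intro exI[of _ S] exI[of _ T]) (auto simp: meeting_path_def)
qed

end

section \<open>The moment bound for the chain\<close>

definition on_lattice :: "nat \<Rightarrow> nat \<times> nat \<Rightarrow> bool" where
  "on_lattice h s \<longleftrightarrow> h dvd fst s \<and> h dvd snd s"

lemma on_lattice_advance: "on_lattice h s \<Longrightarrow> h dvd y \<Longrightarrow> on_lattice h (advance s y)"
  by (cases s) (auto simp: on_lattice_def)

lemma on_lattice_dvd_gap: "on_lattice h s \<Longrightarrow> h dvd gap s"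
  by (auto simp: on_lattice_def gap_def)

lemma (in jump_law) lead_powr_le_trans_op: "0 \<le> p \<Longrightarrow> lead_powr p s \<le> trans_op mu (lead_powr p) s"
proof (cases "absorbed s")
  case False
  assume "0 \<le> p"
  have "lead_powr p s = \<integral>\<^sup>+y. lead_powr p s \<partial>mu" by (simp add: emeasure_space_1)
  also have "\<dots> \<le> \<integral>\<^sup>+y. lead_powr p (advance s y) \<partial>mu"
  proof (intro nn_integral_mono)
    fix y
    have "max (lead s) 1 \<le> max (lead (advance s y)) 1"
      using lead_le_lead_advance[of s y] by (rule max.mono) simp
    then show "lead_powr p s \<le> lead_powr p (advance s y)"
      unfolding lead_powr_def using \<open>0 \<le> p\<close> by (intro ennreal_leI powr_mono2) auto
  qed
  finally show ?thesis using False by (simp add: trans_op_unabsorbed)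
qed (simp add: trans_op_absorbed)

locale walk_law = positive_jump_law mu + moment_jump_law mu p for mu p

context walk_law
begin

lemma uniform_reach_absorbed_above:
  "\<exists>r\<ge>1. \<exists>\<delta>>0. \<forall>s. on_lattice step_span s \<and> gap s \<le> K \<longrightarrow>
     ennreal \<delta> \<le> (trans_op mu ^^ r) (absorbed_above (lead s)) s"
proof -
  obtain r \<delta> where "0 < \<delta>" and paths: "\<forall>d\<in>{d. d \<le> K \<and> step_span dvd d}. \<exists>S T. meeting_path d S T \<and>
      length S + length T \<le> r \<and> \<delta> \<le> path_weight S * path_weight T"
    using meeting_paths_uniform[of "{d. d \<le> K \<and> step_span dvd d}"] meeting_path_of_step_span_dvd by auto
  have "ennreal \<delta> \<le> (trans_op mu ^^ max r 1) (absorbed_above (lead (a, b))) (a, b)"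
    if "on_lattice step_span (a, b)" "gap (a, b) \<le> K" for a b
  proof -
    have "gap (a, b) \<in> {d. d \<le> K \<and> step_span dvd d}" using that on_lattice_dvd_gap by blast
    then obtain S T where ST: "meeting_path (gap (a, b)) S T" "length S + length T \<le> max r 1"
      "\<delta> \<le> path_weight S * path_weight T"
      using paths by fastforce
    then have "ennreal \<delta> \<le> ennreal (path_weight S * path_weight T)" by (intro ennreal_leI)
    also have "\<dots> \<le> (trans_op mu ^^ max r 1) (absorbed_above (max a b)) (a, b)"
    proof (cases "a \<le> b")
      case True
      then show ?thesis using ST
        by (intro path_weight_le_iter_absorbed_above) (auto simp: meeting_path_def gap_def)
    next
      case False
      then have "ennreal (path_weight T * path_weight S)
          \<le> (trans_op mu ^^ max r 1) (absorbed_above (max a b)) (a, b)"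
        using ST by (intro path_weight_le_iter_absorbed_above) (auto simp: meeting_path_def gap_def)
      then show ?thesis by (simp add: mult.commute)
    qed
    finally show ?thesis by (simp add: lead_def)
  qed
  with \<open>0 < \<delta>\<close> show ?thesis by (intro exI[of _ "max r 1"]) auto
qed

lemma lyap_one_step_decrease_far:
  "\<exists>K. \<forall>B s. 1 \<le> B \<longrightarrow> \<not> absorbed s \<longrightarrow> K < gap s \<longrightarrow>
     trans_op mu (\<lambda>s. ennreal (lyap p B s)) s \<le> ennreal (lyap p B s)"
proof -
  obtain y\<^sub>0 where y\<^sub>0: "0 < measure mu {y\<^sub>0}" using ex_atom by blast
  define e where "e = real y\<^sub>0 * measure mu {y\<^sub>0}"
  have "0 < e" using atom_ge_1[OF y\<^sub>0] y\<^sub>0 by (simp add: e_def)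
  define K where "K = y\<^sub>0 + nat \<lceil>2 powr (p - 1) * mom / e\<rceil>"
  have "2 powr (p - 1) * mom / e \<le> real K"
    unfolding K_def using real_nat_ceiling_ge[of "2 powr (p - 1) * mom / e"] by linarith
  then have K: "2 powr (p - 1) * mom \<le> e * real K" using \<open>0 < e\<close> by (simp add: field_simps)
  have "trans_op mu (\<lambda>s. ennreal (lyap p B s)) s \<le> ennreal (lyap p B s)"
    if "1 \<le> B" "\<not> absorbed s" "K < gap s" for B s
  proof (rule lyap_one_step_decrease[OF that(1,2)])
    show "1 \<le> gap s" "y\<^sub>0 \<le> gap s" using that(3) atom_ge_1[OF y\<^sub>0] by (simp_all add: K_def)
    have "e * real K \<le> e * (1 + 2 * real (gap s))" using that(3) \<open>0 < e\<close> by simp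
    then show "2 powr (p - 1) * mom \<le> real y\<^sub>0 * measure mu {y\<^sub>0} * (1 + 2 * real (gap s))"
      using K unfolding e_def[symmetric] by linarith
  qed
  then show ?thesis by blast
qed

lemma lyap_supermartingale:
  "\<exists>B\<ge>1. \<forall>s. on_lattice step_span s \<longrightarrow>
     (\<exists>k\<ge>1. (trans_op mu ^^ k) (\<lambda>s. ennreal (lyap p B s)) s \<le> ennreal (lyap p B s))"
proof -
  obtain K where far: "\<And>B s. 1 \<le> B \<Longrightarrow> \<not> absorbed s \<Longrightarrow> K < gap s \<Longrightarrow>
      trans_op mu (\<lambda>s. ennreal (lyap p B s)) s \<le> ennreal (lyap p B s)"
    using lyap_one_step_decrease_far by blast
  obtain r \<delta> where "1 \<le> r" "0 < \<delta>" and reach: "\<And>s. on_lattice step_span s \<Longrightarrow> gap s \<le> K \<Longrightarrow>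
      ennreal \<delta> \<le> (trans_op mu ^^ r) (absorbed_above (lead s)) s"
    using uniform_reach_absorbed_above[of K] by blast
  obtain \<alpha> where "0 \<le> \<alpha>" and pot_bound: "\<And>B s. 1 \<le> B \<Longrightarrow> (trans_op mu ^^ r) (\<lambda>s. ennreal (pot B s powr p)) s
      \<le> ennreal (pot B s powr p + \<alpha> * pot B s powr (p - 1))"
    using trans_op_iter_pot_powr_le[of r] by blast
  define B where "B = max 1 (2 * \<alpha> * (1 + real K) powr (p - 1) / \<delta>)"
  have "1 \<le> B" by (simp add: B_def)
  have "2 * \<alpha> * (1 + real K) powr (p - 1) / \<delta> \<le> B" by (simp add: B_def)
  then have choice_of_B: "2 * \<alpha> * (1 + real K) powr (p - 1) \<le> \<delta> * B"
    using \<open>0 < \<delta>\<close> by (simp add: field_simps)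
  have "\<exists>k\<ge>1. (trans_op mu ^^ k) (\<lambda>s. ennreal (lyap p B s)) s \<le> ennreal (lyap p B s)"
    if "on_lattice step_span s" for s
  proof (cases "\<not> absorbed s \<and> gap s \<le> K")
    case True
    then show ?thesis
      using lyap_iter_decrease_small_gap[OF \<open>1 \<le> B\<close> _ _ \<open>0 \<le> \<alpha>\<close> pot_bound[OF \<open>1 \<le> B\<close>]
          reach[OF that] \<open>0 < \<delta>\<close> choice_of_B] \<open>1 \<le> r\<close>
      by auto
  next
    case False
    then have "trans_op mu (\<lambda>s. ennreal (lyap p B s)) s \<le> ennreal (lyap p B s)"
      using far[OF \<open>1 \<le> B\<close>] by (cases "absorbed s") (auto simp: trans_op_absorbed)
    then show ?thesis by (intro exI[of _ 1]) simp
  qed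
  with \<open>1 \<le> B\<close> show ?thesis by blast
qed

lemma trans_op_iter_lead_powr_bound:
  "\<exists>C. \<forall>s n. on_lattice step_span s \<longrightarrow>
     (trans_op mu ^^ n) (lead_powr p) s \<le> ennreal (C * (1 + real (fst s) powr p + real (snd s) powr p))"
proof -
  obtain B where "1 \<le> B" and super: "\<And>s. on_lattice step_span s \<Longrightarrow>
      \<exists>k\<ge>1. (trans_op mu ^^ k) (\<lambda>s. ennreal (lyap p B s)) s \<le> ennreal (lyap p B s)"
    using lyap_supermartingale by blast
  have sub: "lead_powr p s \<le> trans_op mu (lead_powr p) s" for s
    using p_ge_1 by (intro lead_powr_le_trans_op) simp
  have dom: "lead_powr p s \<le> ennreal (lyap p B s)" for s
    using p_ge_1 \<open>1 \<le> B\<close> by (intro lead_powr_le_lyap) simp_all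
  have "(trans_op mu ^^ n) (lead_powr p) s \<le> ennreal (2 * (2 + B) powr p * (1 + real (fst s) powr p + real (snd s) powr p))"
    if "on_lattice step_span s" for s n
  proof -
    have "(trans_op mu ^^ n) (lead_powr p) s \<le> ennreal (lyap p B s)"
      by (rule trans_op_iter_le_supermartingale[OF step_span_dvd_AE on_lattice_advance sub dom super that])
    also have "\<dots> \<le> ennreal (2 * (2 + B) powr p * (1 + real (fst s) powr p + real (snd s) powr p))"
      using \<open>1 \<le> B\<close> p_ge_1 by (intro ennreal_leI lyap_le_powr_bound) auto
    finally show ?thesis .
  qed
  then show ?thesis by blast
qed

end

section \<open>Coupling with the two random walks\<close>

text \<open>One step of the coupled pair of walks: the state records the two positions and how many
  steps each walk has taken; \<open>z (Inl k)\<close> and \<open>z (Inr k)\<close> are the \<open>k\<close>-th steps of the two walks.\<close>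
fun walk_step :: "(nat + nat \<Rightarrow> nat) \<Rightarrow> (nat \<times> nat) \<times> nat \<times> nat \<Rightarrow> (nat \<times> nat) \<times> nat \<times> nat" where
  "walk_step z (s, m, n) =
    (if absorbed s then (s, m, n)
     else if fst s \<le> snd s then (advance s (z (Inl (Suc m))), Suc m, n)
     else (advance s (z (Inr (Suc n))), m, Suc n))"

definition future_steps :: "nat \<Rightarrow> nat \<Rightarrow> (nat + nat) set" where
  "future_steps m n = {Inl k | k. m < k} \<union> {Inr k | k. n < k}"

lemma walk_run_cong:
  assumes "\<And>i. i \<in> future_steps m n \<Longrightarrow> z i = z' i"
  shows "(walk_step z ^^ k) (s, m, n) = (walk_step z' ^^ k) (s, m, n)"
  using assms
proof (induction k arbitrary: s m n)
  case (Suc k)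
  have "z (Inl (Suc m)) = z' (Inl (Suc m))" "z (Inr (Suc n)) = z' (Inr (Suc n))"
    by (auto intro!: Suc.prems simp: future_steps_def)
  moreover have "(walk_step z ^^ k) (s', m', n') = (walk_step z' ^^ k) (s', m', n')"
    if "m \<le> m'" "n \<le> n'" for s' m' n'
    using that by (intro Suc.IH Suc.prems) (auto simp: future_steps_def)
  ultimately show ?case by (simp add: funpow_Suc_right del: funpow.simps)
qed simp

lemma measurable_walk_run_PiM:
  assumes "m\<^sub>0 \<le> m" "n\<^sub>0 \<le> n"
  shows "(\<lambda>z. (walk_step z ^^ k) (s, m, n))
    \<in> measurable (PiM (future_steps m\<^sub>0 n\<^sub>0) (\<lambda>_. count_space UNIV)) (count_space UNIV)"
  using assms
proof (induction k arbitrary: s m n)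
  case (Suc k)
  let ?P = "PiM (future_steps m\<^sub>0 n\<^sub>0) (\<lambda>_. count_space UNIV) :: (nat + nat \<Rightarrow> nat) measure"
  have "(\<lambda>z. z i) \<in> measurable ?P (count_space UNIV)" if "i \<in> future_steps m\<^sub>0 n\<^sub>0" for i
    using that by (rule measurable_component_singleton)
  then have steps: "(\<lambda>z. z (Inl (Suc m))) \<in> measurable ?P (count_space UNIV)"
      "(\<lambda>z. z (Inr (Suc n))) \<in> measurable ?P (count_space UNIV)"
    using Suc.prems by (auto simp: future_steps_def)
  have "(\<lambda>z. (walk_step z ^^ k) (advance s (z (Inl (Suc m))), Suc m, n)) \<in> measurable ?P (count_space UNIV)"
    by (rule measurable_compose_countable'[where f = "\<lambda>y z. (walk_step z ^^ k) (advance s y, Suc m, n)"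
        and I = UNIV, OF _ steps(1)]) (use Suc in auto)
  moreover have "(\<lambda>z. (walk_step z ^^ k) (advance s (z (Inr (Suc n))), m, Suc n)) \<in> measurable ?P (count_space UNIV)"
    by (rule measurable_compose_countable'[where f = "\<lambda>y z. (walk_step z ^^ k) (advance s y, m, Suc n)"
        and I = UNIV, OF _ steps(2)]) (use Suc in auto)
  moreover have "(\<lambda>z. (walk_step z ^^ k) (s, m, n)) \<in> measurable ?P (count_space UNIV)"
    using Suc by blast
  ultimately show ?case
    by (cases "absorbed s"; cases "fst s \<le> snd s") (simp_all add: funpow_Suc_right del: funpow.simps)
qed simp

lemma measurable_component_pair:
  fixes G :: "nat \<Rightarrow> 'b \<Rightarrow> ennreal"
  assumes "\<And>y. G y \<in> borel_measurable N"
  shows "(\<lambda>(f, z). G (f i) z) \<in> borel_measurable (PiM {i} (\<lambda>_. count_space UNIV) \<Otimes>\<^sub>M N)"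
proof -
  have "(\<lambda>x. (fst x i, snd x)) \<in> measurable (PiM {i} (\<lambda>_. count_space UNIV) \<Otimes>\<^sub>M N) (count_space UNIV \<Otimes>\<^sub>M N)"
    by (intro measurable_Pair measurable_compose[OF measurable_fst measurable_component_singleton]) auto
  moreover have "case_prod G \<in> borel_measurable (count_space UNIV \<Otimes>\<^sub>M N)"
    by (rule measurable_pair_measure_countable1) (auto intro: assms)
  ultimately have "(\<lambda>x. case_prod G (fst x i, snd x)) \<in> borel_measurable (PiM {i} (\<lambda>_. count_space UNIV) \<Otimes>\<^sub>M N)"
    by (rule measurable_compose)
  then show ?thesis by (simp add: case_prod_beta')
qed

lemma (in prob_space) nn_integral_indep_component:
  fixes X :: "'i \<Rightarrow> 'a \<Rightarrow> nat" and G :: "nat \<Rightarrow> ('i \<Rightarrow> nat) \<Rightarrow> ennreal"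
  assumes indep: "indep_vars (\<lambda>_. count_space UNIV) X I"
    and "i\<^sub>0 \<in> I" "J \<subseteq> I" "i\<^sub>0 \<notin> J"
    and G: "\<And>y. G y \<in> borel_measurable (PiM J (\<lambda>_. count_space UNIV))"
  shows "(\<integral>\<^sup>+\<omega>. G (X i\<^sub>0 \<omega>) (restrict (\<lambda>i. X i \<omega>) J) \<partial>M)
       = (\<integral>\<^sup>+y. (\<integral>\<^sup>+\<omega>. G y (restrict (\<lambda>i. X i \<omega>) J) \<partial>M) \<partial>distr M (count_space UNIV) (X i\<^sub>0))"
proof -
  let ?PJ = "PiM J (\<lambda>_. count_space UNIV) :: ('i \<Rightarrow> nat) measure"
  let ?P1 = "PiM {i\<^sub>0} (\<lambda>_. count_space UNIV) :: ('i \<Rightarrow> nat) measure"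
  let ?Z = "\<lambda>\<omega>. restrict (\<lambda>i. X i \<omega>) J"
  let ?R = "\<lambda>\<omega>. restrict (\<lambda>i. X i \<omega>) {i\<^sub>0}"
  have iv: "indep_var ?P1 ?R ?PJ ?Z"
    using assms by (intro indep_var_restrict[OF indep]) auto
  have R: "?R \<in> measurable M ?P1" and Z: "?Z \<in> measurable M ?PJ"
    using iv by (auto dest: indep_var_rv1 indep_var_rv2)
  have X: "X i\<^sub>0 \<in> measurable M (count_space UNIV)"
    using indep \<open>i\<^sub>0 \<in> I\<close> by (auto simp: indep_vars_def)
  have G1: "(\<lambda>(f, z). G (f i\<^sub>0) z) \<in> borel_measurable (?P1 \<Otimes>\<^sub>M ?PJ)"
    using G by (rule measurable_component_pair)
  have sets_eq: "sets (distr M ?P1 ?R \<Otimes>\<^sub>M distr M ?PJ ?Z) = sets (?P1 \<Otimes>\<^sub>M ?PJ)"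
    by (rule sets_pair_measure_cong) simp_all
  have G2: "(\<lambda>(f, z). G (f i\<^sub>0) z) \<in> borel_measurable (distr M ?P1 ?R \<Otimes>\<^sub>M distr M ?PJ ?Z)"
    unfolding measurable_cong_sets[OF sets_eq refl] by (rule G1)
  interpret Z: prob_space "distr M ?PJ ?Z" by (rule prob_space_distr[OF Z])
  have "(\<integral>\<^sup>+\<omega>. G (X i\<^sub>0 \<omega>) (?Z \<omega>) \<partial>M)
      = integral\<^sup>N (distr M (?P1 \<Otimes>\<^sub>M ?PJ) (\<lambda>x. (?R x, ?Z x))) (\<lambda>(f, z). G (f i\<^sub>0) z)"
    by (subst nn_integral_distr) (auto intro!: measurable_Pair R Z G1)
  also have "\<dots> = integral\<^sup>N (distr M ?P1 ?R \<Otimes>\<^sub>M distr M ?PJ ?Z) (\<lambda>(f, z). G (f i\<^sub>0) z)"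
    using iv by (simp add: indep_var_distribution_eq)
  also have "\<dots> = (\<integral>\<^sup>+f. (\<integral>\<^sup>+z. G (f i\<^sub>0) z \<partial>distr M ?PJ ?Z) \<partial>distr M ?P1 ?R)"
    using G2 by (subst Z.nn_integral_fst[symmetric]) auto
  also have "\<dots> = (\<integral>\<^sup>+\<omega>. (\<integral>\<^sup>+z. G (X i\<^sub>0 \<omega>) z \<partial>distr M ?PJ ?Z) \<partial>M)"
    by (subst nn_integral_distr[OF R])
       (auto intro: measurable_compose[OF measurable_component_singleton])
  also have "\<dots> = (\<integral>\<^sup>+y. (\<integral>\<^sup>+z. G y z \<partial>distr M ?PJ ?Z) \<partial>distr M (count_space UNIV) (X i\<^sub>0))"
    by (subst nn_integral_distr[OF X]) auto
  also have "\<dots> = (\<integral>\<^sup>+y. (\<integral>\<^sup>+\<omega>. G y (?Z \<omega>) \<partial>M) \<partial>distr M (count_space UNIV) (X i\<^sub>0))"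
    by (intro nn_integral_cong) (auto intro!: nn_integral_distr Z G)
  finally show ?thesis .
qed

locale two_walks = prob_space M for M :: "'a measure" +
  fixes mu :: "nat measure" and Y Yt :: "nat \<Rightarrow> 'a \<Rightarrow> nat"
  assumes indep: "indep_vars (\<lambda>_. count_space UNIV) (\<lambda>i. case i of Inl k \<Rightarrow> Y k | Inr k \<Rightarrow> Yt k)
      ({Inl k | k. k \<ge> 1} \<union> {Inr k | k. k \<ge> 1})"
    and distr_Y: "\<And>k. k \<ge> 1 \<Longrightarrow> distr M (count_space UNIV) (Y k) = mu"
    and distr_Yt: "\<And>k. k \<ge> 1 \<Longrightarrow> distr M (count_space UNIV) (Yt k) = mu"
begin

definition walk_steps :: "'a \<Rightarrow> nat + nat \<Rightarrow> nat" where
  "walk_steps \<omega> i = (case i of Inl k \<Rightarrow> Y k \<omega> | Inr k \<Rightarrow> Yt k \<omega>)"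

abbreviation walk_run :: "nat \<Rightarrow> (nat \<times> nat) \<times> nat \<times> nat \<Rightarrow> 'a \<Rightarrow> (nat \<times> nat) \<times> nat \<times> nat" where
  "walk_run k x \<omega> \<equiv> (walk_step (walk_steps \<omega>) ^^ k) x"

lemma walk_steps_simps [simp]: "walk_steps \<omega> (Inl k) = Y k \<omega>" "walk_steps \<omega> (Inr k) = Yt k \<omega>"
  by (simp_all add: walk_steps_def)

lemma indep_walk_steps:
  "indep_vars (\<lambda>_. count_space UNIV) (\<lambda>i \<omega>. walk_steps \<omega> i) ({Inl k | k. k \<ge> 1} \<union> {Inr k | k. k \<ge> 1})"
proof -
  have "(\<lambda>i \<omega>. walk_steps \<omega> i) = (\<lambda>i. case i of Inl k \<Rightarrow> Y k | Inr k \<Rightarrow> Yt k)"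
    by (auto simp: fun_eq_iff walk_steps_def split: sum.split)
  then show ?thesis using indep by simp
qed

lemma measurable_walk_steps:
  "i \<in> {Inl k | k. k \<ge> 1} \<union> {Inr k | k. k \<ge> 1} \<Longrightarrow> (\<lambda>\<omega>. walk_steps \<omega> i) \<in> measurable M (count_space UNIV)"
  using indep_walk_steps by (auto simp: indep_vars_def)

lemma walk_run_restrict: "walk_run k (s, m, n) \<omega> = (walk_step (restrict (walk_steps \<omega>) (future_steps m n)) ^^ k) (s, m, n)"
  by (rule walk_run_cong) simp

lemma measurable_walk_run: "(\<lambda>\<omega>. walk_run k (s, m, n) \<omega>) \<in> measurable M (count_space UNIV)"
proof -
  have "(\<lambda>\<omega>. restrict (walk_steps \<omega>) (future_steps m n))
      \<in> measurable M (PiM (future_steps m n) (\<lambda>_. count_space UNIV))"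
    by (intro measurable_restrict measurable_walk_steps) (auto simp: future_steps_def)
  from measurable_compose[OF this measurable_walk_run_PiM[of m m n n k s]] show ?thesis
    by (simp add: walk_run_restrict)
qed

lemma nn_integral_walk_run_split:
  assumes "i\<^sub>0 \<in> {Inl k | k. k \<ge> 1} \<union> {Inr k | k. k \<ge> 1}" "i\<^sub>0 \<notin> future_steps m n"
    and "distr M (count_space UNIV) (\<lambda>\<omega>. walk_steps \<omega> i\<^sub>0) = mu"
  shows "(\<integral>\<^sup>+\<omega>. f (fst (walk_run k (g (walk_steps \<omega> i\<^sub>0), m, n) \<omega>)) \<partial>M)
       = (\<integral>\<^sup>+y. (\<integral>\<^sup>+\<omega>. f (fst (walk_run k (g y, m, n) \<omega>)) \<partial>M) \<partial>mu)"
proof -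
  define G where "G y z = f (fst ((walk_step z ^^ k) (g y, m, n)))" for y z
  have G: "G y \<in> borel_measurable (PiM (future_steps m n) (\<lambda>_. count_space UNIV))" for y
    unfolding G_def by (rule measurable_compose[OF measurable_walk_run_PiM]) auto
  have "future_steps m n \<subseteq> {Inl k | k. k \<ge> 1} \<union> {Inr k | k. k \<ge> 1}"
    by (force simp: future_steps_def)
  from nn_integral_indep_component[where G = G, OF indep_walk_steps assms(1) this assms(2) G]
  have "(\<integral>\<^sup>+\<omega>. G (walk_steps \<omega> i\<^sub>0) (restrict (walk_steps \<omega>) (future_steps m n)) \<partial>M)
      = (\<integral>\<^sup>+y. (\<integral>\<^sup>+\<omega>. G y (restrict (walk_steps \<omega>) (future_steps m n)) \<partial>M) \<partial>mu)"
    using assms(3) by simp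
  then show ?thesis by (simp add: G_def walk_run_restrict[symmetric])
qed

text \<open>The law of the positions after \<open>k\<close> steps of the coupled walks is the \<open>k\<close>-step law of the
  absorbed chain, because each step uses a fresh, independent step of one of the walks.\<close>
lemma nn_integral_walk_run:
  "(\<integral>\<^sup>+\<omega>. f (fst (walk_run k (s, m, n) \<omega>)) \<partial>M) = (trans_op mu ^^ k) f s"
proof (induction k arbitrary: s m n)
  case 0
  then show ?case by (simp add: emeasure_space_1)
next
  case (Suc k)
  show ?case
  proof (cases "absorbed s")
    case True
    then have "walk_run (Suc k) (s, m, n) \<omega> = (s, m, n)" for \<omega>
      by (induction k) (simp_all add: funpow_Suc_right del: funpow.simps)
    with True show ?thesis by (simp add: emeasure_space_1 trans_op_iter_absorbed del: funpow.simps)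
  next
    case False
    show ?thesis
    proof (cases "fst s \<le> snd s")
      case True
      have "(\<integral>\<^sup>+\<omega>. f (fst (walk_run (Suc k) (s, m, n) \<omega>)) \<partial>M)
          = (\<integral>\<^sup>+\<omega>. f (fst (walk_run k (advance s (walk_steps \<omega> (Inl (Suc m))), Suc m, n) \<omega>)) \<partial>M)"
        using False True by (simp add: funpow_Suc_right del: funpow.simps)
      also have "\<dots> = (\<integral>\<^sup>+y. (trans_op mu ^^ k) f (advance s y) \<partial>mu)"
        by (subst nn_integral_walk_run_split)
           (auto simp: future_steps_def distr_Y Suc.IH)
      finally show ?thesis using False by (simp add: trans_op_unabsorbed)
    next
      case nle: False
      have "(\<integral>\<^sup>+\<omega>. f (fst (walk_run (Suc k) (s, m, n) \<omega>)) \<partial>M)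
          = (\<integral>\<^sup>+\<omega>. f (fst (walk_run k (advance s (walk_steps \<omega> (Inr (Suc n))), m, Suc n) \<omega>)) \<partial>M)"
        using False nle by (simp add: funpow_Suc_right del: funpow.simps)
      also have "\<dots> = (\<integral>\<^sup>+y. (trans_op mu ^^ k) f (advance s y) \<partial>mu)"
        by (subst nn_integral_walk_run_split)
           (auto simp: future_steps_def distr_Yt Suc.IH)
      finally show ?thesis using False by (simp add: trans_op_unabsorbed)
    qed
  qed
qed

lemma walk_run_positions:
  "walk_run k ((i, j), 0, 0) \<omega> = ((a, b), m, n) \<Longrightarrow> a = i + psum Y m \<omega> \<and> b = j + psum Yt n \<omega>"
proof (induction k arbitrary: a b m n)
  case 0
  then show ?case by (auto simp: psum_def)
next
  case (Suc k)
  obtain a' b' m' n' where run: "walk_run k ((i, j), 0, 0) \<omega> = ((a', b'), m', n')"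
    by (metis prod.exhaust)
  have "walk_step (walk_steps \<omega>) ((a', b'), m', n') = ((a, b), m, n)"
    using Suc.prems run by simp
  with Suc.IH[OF run] show ?case by (auto simp: psum_def split: if_splits)
qed

lemma lead_le_walk_step: "lead (fst x) \<le> lead (fst (walk_step z x))"
  by (cases x) (auto simp: lead_le_lead_advance)

lemma walk_run_growth:
  assumes pos: "\<And>k. 1 \<le> Y (Suc k) \<omega>" "\<And>k. 1 \<le> Yt (Suc k) \<omega>"
    and unabsorbed: "\<And>k. k < N \<Longrightarrow> \<not> absorbed (fst (walk_run k x \<omega>))"
  shows "fst (fst x) + snd (fst x) + N \<le> fst (fst (walk_run N x \<omega>)) + snd (fst (walk_run N x \<omega>))"
  using unabsorbed
proof (induction N)
  case (Suc N)
  obtain a b m n where run: "walk_run N x \<omega> = ((a, b), m, n)" by (metis prod.exhaust)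
  have "\<not> absorbed (a, b)" using Suc.prems[of N] run by simp
  then have "a + b + 1 \<le> fst (fst (walk_step (walk_steps \<omega>) ((a, b), m, n))) + snd (fst (walk_step (walk_steps \<omega>) ((a, b), m, n)))"
    using pos[of m] pos[of n] by auto
  with Suc run show ?case by simp
qed simp

text \<open>If the walks meet, the run is absorbed at a meeting level, which bounds \<open>L\<close>; if they never
  meet, the run is never absorbed and its lead grows without bound.\<close>
lemma meet_time_powr_le_SUP_walk_run:
  assumes pos: "\<And>k. 1 \<le> Y (Suc k) \<omega>" "\<And>k. 1 \<le> Yt (Suc k) \<omega>" and "1 \<le> p"
  shows "enat_powr (meet_time Y Yt i j \<omega>) p \<le> (SUP N. lead_powr p (fst (walk_run N ((i, j), 0, 0) \<omega>)))"
proof (cases "\<exists>N. absorbed (fst (walk_run N ((i, j), 0, 0) \<omega>))")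
  case True
  then obtain N a b m n where run: "walk_run N ((i, j), 0, 0) \<omega> = ((a, b), m, n)" and "absorbed (a, b)"
    by (metis prod.exhaust fst_conv)
  then have "a = b" "1 \<le> a" by (auto simp: absorbed_def)
  moreover note walk_run_positions[OF run]
  ultimately have "meet_time Y Yt i j \<omega> \<le> enat a"
    unfolding meet_time_def by (intro Inf_lower) auto
  then obtain l where l: "meet_time Y Yt i j \<omega> = enat l" "l \<le> a"
    by (metis enat_ile enat_ord_simps(1))
  have "enat_powr (meet_time Y Yt i j \<omega>) p \<le> lead_powr p (fst (walk_run N ((i, j), 0, 0) \<omega>))"
    using l run \<open>a = b\<close> \<open>1 \<le> a\<close> \<open>1 \<le> p\<close>
    by (auto simp: enat_powr_def lead_powr_def lead_def intro!: ennreal_leI powr_mono2)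
  also have "\<dots> \<le> (SUP N. lead_powr p (fst (walk_run N ((i, j), 0, 0) \<omega>)))"
    by (rule SUP_upper) simp
  finally show ?thesis .
next
  case False
  have top: "(SUP N. lead_powr p (fst (walk_run N ((i, j), 0, 0) \<omega>))) = \<top>"
  proof (subst SUP_eq_top_iff, intro allI impI)
    fix x :: ennreal
    assume "x < \<top>"
    then obtain r where r: "x = ennreal r" "0 \<le> r" by (cases x rule: ennreal_cases) auto
    define N where "N = 2 * (nat \<lceil>r\<rceil> + 1)"
    let ?l = "lead (fst (walk_run N ((i, j), 0, 0) \<omega>))"
    have "N \<le> 2 * ?l"
      using walk_run_growth[OF pos, of N "((i, j), 0, 0)"] False by (auto simp: lead_def)
    then have "nat \<lceil>r\<rceil> + 1 \<le> ?l" by (simp add: N_def)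
    then have "r < real ?l" by linarith
    also have "real ?l \<le> real (max ?l 1) powr p"
      using \<open>1 \<le> p\<close> powr_mono[of 1 p "real (max ?l 1)"] by simp
    finally have "x < lead_powr p (fst (walk_run N ((i, j), 0, 0) \<omega>))"
      using r by (simp add: lead_powr_def ennreal_lessI)
    then show "\<exists>N\<in>UNIV. x < lead_powr p (fst (walk_run N ((i, j), 0, 0) \<omega>))" by blast
  qed
  show ?thesis unfolding top by (rule top_greatest)
qed

lemma nn_integral_meet_time_powr_le:
  assumes pos: "AE y in mu. 1 \<le> y" and "1 \<le> p"
  shows "(\<integral>\<^sup>+\<omega>. enat_powr (meet_time Y Yt i j \<omega>) p \<partial>M) \<le> (SUP n. (trans_op mu ^^ n) (lead_powr p) (i, j))"
proof -
  have AE_step: "AE \<omega> in M. 1 \<le> walk_steps \<omega> i"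
    if "i \<in> {Inl k | k. k \<ge> 1} \<union> {Inr k | k. k \<ge> 1}" for i
  proof -
    have law: "distr M (count_space UNIV) (\<lambda>\<omega>. walk_steps \<omega> i) = mu"
      using that distr_Y distr_Yt by auto
    have "AE y in distr M (count_space UNIV) (\<lambda>\<omega>. walk_steps \<omega> i). 1 \<le> y"
      unfolding law by (rule pos)
    then show ?thesis by (subst (asm) AE_distr_iff) (auto simp: measurable_walk_steps[OF that])
  qed
  have "AE \<omega> in M. \<forall>k. 1 \<le> Y (Suc k) \<omega> \<and> 1 \<le> Yt (Suc k) \<omega>"
  proof (subst AE_all_countable, intro allI AE_conjI)
    show "AE \<omega> in M. 1 \<le> Y (Suc k) \<omega>" "AE \<omega> in M. 1 \<le> Yt (Suc k) \<omega>" for k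
      using AE_step[of "Inl (Suc k)"] AE_step[of "Inr (Suc k)"] by auto
  qed
  then have "(\<integral>\<^sup>+\<omega>. enat_powr (meet_time Y Yt i j \<omega>) p \<partial>M)
      \<le> (\<integral>\<^sup>+\<omega>. (SUP N. lead_powr p (fst (walk_run N ((i, j), 0, 0) \<omega>))) \<partial>M)"
    using \<open>1 \<le> p\<close> by (intro nn_integral_mono_AE) (auto elim!: eventually_mono intro!: meet_time_powr_le_SUP_walk_run)
  also have "\<dots> = (SUP N. \<integral>\<^sup>+\<omega>. lead_powr p (fst (walk_run N ((i, j), 0, 0) \<omega>)) \<partial>M)"
  proof (rule nn_integral_monotone_convergence_SUP)
    show "incseq (\<lambda>N \<omega>. lead_powr p (fst (walk_run N ((i, j), 0, 0) \<omega>)))"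
      unfolding lead_powr_def using \<open>1 \<le> p\<close>
      by (intro incseq_SucI le_funI ennreal_leI powr_mono2 of_nat_mono max.mono)
         (auto simp: lead_le_walk_step)
    show "(\<lambda>\<omega>. lead_powr p (fst (walk_run N ((i, j), 0, 0) \<omega>))) \<in> borel_measurable M" for N
      by (rule measurable_compose[OF measurable_walk_run]) simp
  qed
  also have "\<dots> = (SUP N. (trans_op mu ^^ N) (lead_powr p) (i, j))"
    by (simp add: nn_integral_walk_run)
  finally show ?thesis .
qed

end

lemma walk_law_distr:
  assumes "prob_space M" and X: "X \<in> measurable M (count_space UNIV)"
    and "AE \<omega> in M. 1 \<le> X \<omega>" "1 \<le> p" "(\<integral>\<^sup>+\<omega>. ennreal (real (X \<omega>) powr (p + 1)) \<partial>M) < \<infinity>"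
  shows "walk_law (distr M (count_space UNIV) X) p"
proof -
  interpret D: jump_law "distr M (count_space UNIV) X"
    by (intro jump_law.intro jump_law_axioms.intro prob_space.prob_space_distr[OF assms(1) X]) simp
  have "positive_jump_law (distr M (count_space UNIV) X)"
    using assms(3) by (intro positive_jump_law.intro D.jump_law_axioms positive_jump_law_axioms.intro)
      (simp add: AE_distr_iff X)
  moreover have "moment_jump_law (distr M (count_space UNIV) X) p"
    using assms(4,5) by (intro moment_jump_law.intro D.jump_law_axioms moment_jump_law_axioms.intro)
      (simp_all add: nn_integral_distr X)
  ultimately show ?thesis by (rule walk_law.intro)
qed

lemma span_distr: "X \<in> measurable M (count_space UNIV) \<Longrightarrow> span (distr M (count_space UNIV) X) (\<lambda>y. y) = span M X"
  by (simp add: span_def AE_distr_iff)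

theorem lemmaA1:
  fixes M :: "'a measure" and Y Yt :: "nat \<Rightarrow> 'a \<Rightarrow> nat" and p :: real
  assumes "prob_space M"
    and "prob_space.indep_vars M (\<lambda>_. count_space UNIV)
           (\<lambda>x. case x of Inl k \<Rightarrow> Y k | Inr k \<Rightarrow> Yt k)
           ({Inl k | k. k \<ge> 1} \<union> {Inr k | k. k \<ge> 1})"
    and "\<And>k. k \<ge> 1 \<Longrightarrow> distr M (count_space UNIV) (Y k) = distr M (count_space UNIV) (Y 1)"
    and "\<And>k. k \<ge> 1 \<Longrightarrow> distr M (count_space UNIV) (Yt k) = distr M (count_space UNIV) (Y 1)"
    and "AE \<omega> in M. Y 1 \<omega> \<ge> 1"
    and "1 \<le> p"
    and "(\<integral>\<^sup>+ \<omega>. ennreal (real (Y 1 \<omega>) powr (p + 1)) \<partial>M) < \<infinity>"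
  shows "\<exists>C::real. \<forall>i j. span M (Y 1) dvd i \<and> span M (Y 1) dvd j \<longrightarrow>
           (\<integral>\<^sup>+ \<omega>. enat_powr (meet_time Y Yt i j \<omega>) p \<partial>M)
             \<le> ennreal (C * (1 + real i powr p + real j powr p))"
proof -
  define mu where "mu = distr M (count_space UNIV) (Y 1)"
  have "two_walks M mu Y Yt"
    unfolding mu_def using assms(1-4) by (intro two_walks.intro two_walks_axioms.intro)
  then interpret two_walks M mu Y Yt .
  have Y1: "Y 1 \<in> measurable M (count_space UNIV)"
    using measurable_walk_steps[of "Inl 1"] by simp
  interpret W: walk_law mu p
    unfolding mu_def using assms(1) Y1 assms(5-7) by (rule walk_law_distr)
  obtain C where C: "\<And>s n. on_lattice W.step_span s \<Longrightarrow>
      (trans_op mu ^^ n) (lead_powr p) s \<le> ennreal (C * (1 + real (fst s) powr p + real (snd s) powr p))"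
    using W.trans_op_iter_lead_powr_bound by blast
  have "(\<integral>\<^sup>+ \<omega>. enat_powr (meet_time Y Yt i j \<omega>) p \<partial>M) \<le> ennreal (C * (1 + real i powr p + real j powr p))"
    if "span M (Y 1) dvd i \<and> span M (Y 1) dvd j" for i j
  proof -
    have "on_lattice W.step_span (i, j)"
      using that unfolding on_lattice_def mu_def span_distr[OF Y1] by simp
    have "(\<integral>\<^sup>+ \<omega>. enat_powr (meet_time Y Yt i j \<omega>) p \<partial>M) \<le> (SUP n. (trans_op mu ^^ n) (lead_powr p) (i, j))"
      using W.steps_pos assms(6) by (rule nn_integral_meet_time_powr_le)
    also have "\<dots> \<le> ennreal (C * (1 + real i powr p + real j powr p))"
      using C[OF \<open>on_lattice W.step_span (i, j)\<close>] by (simp add: SUP_least)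
    finally show ?thesis .
  qed
  then show ?thesis by blast
qed

end
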